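(* Let $\mathcal P\subseteq\mathcal G$ be a pseudo-torsion class and $\mathcal Q=\mathcal P^\perp$. For every $M\in\mathcal G$ there is a unique strict subobject $tM$ of $M$ such that $tM\in\mathcal P$ and $fM:=M/tM\in\mathcal Q$; thus $0\to tM\to M\to fM\to 0$ is a strict exact sequence. Moreover, for every strict morphism $\varphi:M\to N$ with $M,N\in\mathcal G$, $\varphi(tM)\subseteq tN$, and the induced maps $tM\to tN$ and $fM\to fN$ are strict morphisms making the evident diagram with the two strict exact sequences commute.
   Context: Let $\Lambda$ be a finite dimensional algebra over a field and $\mathrm{mod}\text-\Lambda$ the category of finitely generated right $\Lambda$-modules. Fix a torsion class $\mathcal G\subseteq\mathrm{mod}\text-\Lambda$, i.e. a class of modules closed under isomorphisms, extensions and quotients. For $B\in\mathcal G$, a subobject of $B$ is a submodule of $B$ that lies in $\mathcal G$. A subobject $A\subseteq B$ is a strict subobject if $A\cap B'\in\mathcal G$ for every subobject $B'$ of $B$. A strict quotient of $B$ is $B/A$ with $A$ a strict subobject. A short exact sequence $0\to A\to B\to C\to0$ with $A,B,C\in\mathcal G$ is strict exact (and $B$ a strict extension of $A$ by $C$) if the image of $A$ is a strict subobject of $B$. A strict morphism is a homomorphism $f:A\to B$ with $A,B\in\mathcal G$ such that $\ker f\in\mathcal G$ is a strict subobject of $A$ and $\operatorname{im} f$ is a strict subobject of $B$. A pseudo-torsion class is a nonempty class $\mathcal P\subseteq\mathcal G$ closed under strict quotients and strict extensions. For $\mathcal X\subseteq\mathcal G$, $\mathcal X^\perp$ is the class of $Y\in\mathcal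 G$ such that every strict morphism $X\to Y$ with $X\in\mathcal X$ is zero. *)

theory Defs
  imports Main
begin

(* Right modules over a ring Lambda, where Lambda is the type 'r (carrier UNIV).
   Modules are structures whose carrier is a subset of a fixed universe type. *)

record ('m, 'r) rmod =
  mcarr :: "'m set"
  madd  :: "'m \<Rightarrow> 'm \<Rightarrow> 'm"
  mzero :: "'m"
  mact  :: "'m \<Rightarrow> 'r \<Rightarrow> 'm"

(* Universe of carriers: large enough to contain an isomorphic copy of every
   finitely generated right module over 'r *)
type_synonym 'r umod = "('r \<times> nat, 'r) rmod"

definition fd_algebra :: "('k::field \<Rightarrow> 'r::ring_1) \<Rightarrow> bool" where
  "fd_algebra \<iota> \<longleftrightarrow>
     \<iota> 1 = 1 \<and> (\<forall>a b. \<iota> (a + b) = \<iota> a + \<iota> b) \<and> (\<forall>a b. \<iota> (a * b) = \<iota> a * \<iota> b) \<and>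
     (\<forall>a x. \<iota> a * x = x * \<iota> a) \<and>
     (\<exists>B. finite B \<and> (\<forall>x. \<exists>c. x = (\<Sum>b\<in>B. \<iota> (c b) * b)))"

definition rmodule :: "('m, 'r::ring_1) rmod \<Rightarrow> bool" where
  "rmodule M \<longleftrightarrow>
     mzero M \<in> mcarr M \<and>
     (\<forall>x\<in>mcarr M. \<forall>y\<in>mcarr M. madd M x y \<in> mcarr M) \<and>
     (\<forall>x\<in>mcarr M. \<forall>r. mact M x r \<in> mcarr M) \<and>
     (\<forall>x\<in>mcarr M. \<forall>y\<in>mcarr M. \<forall>z\<in>mcarr M. madd M (madd M x y) z = madd M x (madd M y z)) \<and>
     (\<forall>x\<in>mcarr M. \<forall>y\<in>mcarr M. madd M x y = madd M y x) \<and>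
     (\<forall>x\<in>mcarr M. madd M (mzero M) x = x) \<and>
     (\<forall>x\<in>mcarr M. \<exists>y\<in>mcarr M. madd M x y = mzero M) \<and>
     (\<forall>x\<in>mcarr M. \<forall>y\<in>mcarr M. \<forall>r. mact M (madd M x y) r = madd M (mact M x r) (mact M y r)) \<and>
     (\<forall>x\<in>mcarr M. \<forall>r s. mact M x (r + s) = madd M (mact M x r) (mact M x s)) \<and>
     (\<forall>x\<in>mcarr M. \<forall>r s. mact M x (r * s) = mact M (mact M x r) s) \<and>
     (\<forall>x\<in>mcarr M. mact M x 1 = x)"

definition submod :: "('m, 'r) rmod \<Rightarrow> 'm set \<Rightarrow> bool" where
  "submod M A \<longleftrightarrow> A \<subseteq> mcarr M \<and> mzero M \<in> A \<and>
     (\<forall>x\<in>A. \<forall>y\<in>A. madd M x y \<in> A) \<and> (\<forall>x\<in>A. \<forall>r. mact M x r \<in> A)"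

definition restr :: "('m, 'r) rmod \<Rightarrow> 'm set \<Rightarrow> ('m, 'r) rmod" where
  "restr M A = M\<lparr>mcarr := A\<rparr>"

definition fingen :: "('m, 'r) rmod \<Rightarrow> bool" where
  "fingen M \<longleftrightarrow> (\<exists>S. finite S \<and> S \<subseteq> mcarr M \<and>
     (\<forall>A. submod M A \<and> S \<subseteq> A \<longrightarrow> A = mcarr M))"

definition modlam :: "('m, 'r::ring_1) rmod \<Rightarrow> bool" where
  "modlam M \<longleftrightarrow> rmodule M \<and> fingen M"

definition hom :: "('m, 'r) rmod \<Rightarrow> ('n, 'r) rmod \<Rightarrow> ('m \<Rightarrow> 'n) \<Rightarrow> bool" where
  "hom M N f \<longleftrightarrow> (\<forall>x\<in>mcarr M. f x \<in> mcarr N) \<and>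
     (\<forall>x\<in>mcarr M. \<forall>y\<in>mcarr M. f (madd M x y) = madd N (f x) (f y)) \<and>
     (\<forall>x\<in>mcarr M. \<forall>r. f (mact M x r) = mact N (f x) r)"

definition kern :: "('m, 'r) rmod \<Rightarrow> ('n, 'r) rmod \<Rightarrow> ('m \<Rightarrow> 'n) \<Rightarrow> 'm set" where
  "kern M N f = {x \<in> mcarr M. f x = mzero N}"

definition torsion_class :: "('m, 'r::ring_1) rmod set \<Rightarrow> bool" where
  "torsion_class G \<longleftrightarrow>
     (\<forall>M\<in>G. modlam M) \<and>
     (\<forall>M N f. M \<in> G \<and> modlam N \<and> hom M N f \<and> bij_betw f (mcarr M) (mcarr N) \<longrightarrow> N \<in> G) \<and>
     (\<forall>M N f. M \<in> G \<and> modlam N \<and> hom M N f \<and> f ` mcarr M = mcarr N \<longrightarrow> N \<in> G) \<and>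
     (\<forall>A B C i p. modlam A \<and> modlam B \<and> modlam C \<and> hom A B i \<and> inj_on i (mcarr A) \<and>
        hom B C p \<and> p ` mcarr B = mcarr C \<and> i ` mcarr A = kern B C p \<and> A \<in> G \<and> C \<in> G
        \<longrightarrow> B \<in> G)"

definition subobj :: "('m, 'r) rmod set \<Rightarrow> ('m, 'r) rmod \<Rightarrow> 'm set \<Rightarrow> bool" where
  "subobj G B A \<longleftrightarrow> submod B A \<and> restr B A \<in> G"

definition strict_sub :: "('m, 'r) rmod set \<Rightarrow> ('m, 'r) rmod \<Rightarrow> 'm set \<Rightarrow> bool" where
  "strict_sub G B A \<longleftrightarrow> subobj G B A \<and> (\<forall>B'. subobj G B B' \<longrightarrow> restr B (A \<inter> B') \<in> G)"

(* q : M -> N is a quotient map with kernel A, i.e. N is (a copy of) M/A *)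
definition quot_map :: "('m, 'r) rmod \<Rightarrow> ('m, 'r) rmod \<Rightarrow> ('m \<Rightarrow> 'm) \<Rightarrow> 'm set \<Rightarrow> bool" where
  "quot_map M N q A \<longleftrightarrow> hom M N q \<and> q ` mcarr M = mcarr N \<and> kern M N q = A"

definition strict_exact :: "('m, 'r) rmod set \<Rightarrow> ('m, 'r) rmod \<Rightarrow> ('m, 'r) rmod \<Rightarrow> ('m, 'r) rmod
     \<Rightarrow> ('m \<Rightarrow> 'm) \<Rightarrow> ('m \<Rightarrow> 'm) \<Rightarrow> bool" where
  "strict_exact G A B C i p \<longleftrightarrow> A \<in> G \<and> B \<in> G \<and> C \<in> G \<and>
     hom A B i \<and> inj_on i (mcarr A) \<and> hom B C p \<and> p ` mcarr B = mcarr C \<and>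
     i ` mcarr A = kern B C p \<and> strict_sub G B (i ` mcarr A)"

definition strict_mor :: "('m, 'r) rmod set \<Rightarrow> ('m, 'r) rmod \<Rightarrow> ('m, 'r) rmod \<Rightarrow> ('m \<Rightarrow> 'm) \<Rightarrow> bool" where
  "strict_mor G A B f \<longleftrightarrow> A \<in> G \<and> B \<in> G \<and> hom A B f \<and>
     strict_sub G A (kern A B f) \<and> strict_sub G B (f ` mcarr A)"

definition pseudo_torsion :: "('m, 'r::ring_1) rmod set \<Rightarrow> ('m, 'r) rmod set \<Rightarrow> bool" where
  "pseudo_torsion G P \<longleftrightarrow> P \<noteq> {} \<and> P \<subseteq> G \<and>
     (\<forall>B N q A. B \<in> P \<and> modlam N \<and> strict_sub G B A \<and> quot_map B N q A \<longrightarrow> N \<in> P) \<and>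
     (\<forall>A B C i p. strict_exact G A B C i p \<and> A \<in> P \<and> C \<in> P \<longrightarrow> B \<in> P)"

definition perp :: "('m, 'r) rmod set \<Rightarrow> ('m, 'r) rmod set \<Rightarrow> ('m, 'r) rmod set" where
  "perp G X = {Y \<in> G. \<forall>X' f. X' \<in> X \<and> strict_mor G X' Y f \<longrightarrow> (\<forall>x\<in>mcarr X'. f x = mzero Y)}"

definition tors_part :: "('m, 'r::ring_1) rmod set \<Rightarrow> ('m, 'r) rmod set \<Rightarrow> ('m, 'r) rmod set
     \<Rightarrow> ('m, 'r) rmod \<Rightarrow> 'm set \<Rightarrow> bool" where
  "tors_part G P Q M T \<longleftrightarrow> strict_sub G M T \<and> restr M T \<in> P \<and>
     (\<exists>F q. modlam F \<and> quot_map M F q T \<and> F \<in> Q)"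

end

theory Submission
  imports Defs
begin

text \<open>The torsion part \<open>tM\<close> is the largest strict subobject of \<open>M\<close> lying in \<open>P\<close>. As \<open>M\<close> is
  finite-dimensional over \<open>k\<close>, the strict subobjects of \<open>M\<close> lying in \<open>P\<close> (among them \<open>0\<close>, a strict
  quotient of any member of \<open>P\<close>) have a maximal element \<open>T\<close>, and \<open>M/T \<in> P\<^sup>\<perp>\<close>: a strict
  morphism \<open>X \<rightarrow> M/T\<close> with \<open>X \<in> P\<close> has a strict image \<open>I \<in> P\<close>, whose preimage in \<open>M\<close> is a
  strict extension of \<open>T\<close> by \<open>I\<close>, so lies in \<open>P\<close>, and maximality forces \<open>I = 0\<close>. Conversely
  every strict subobject \<open>Y \<in> P\<close> of \<open>M\<close> maps to zero under the strict morphism \<open>M \<rightarrow> M/T\<close>, so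
  \<open>Y \<subseteq> T\<close>; this gives uniqueness, and functoriality because \<open>\<phi>(tM)\<close> is a strict quotient
  of \<open>tM\<close> and a strict subobject of \<open>N\<close>. Underneath lies the fact that images and preimages of
  strict subobjects under strict morphisms are strict, which only uses that \<open>G\<close> is closed under
  quotients and extensions.\<close>

abbreviation mdiff :: "('m, 'r::ring_1) rmod \<Rightarrow> 'm \<Rightarrow> 'm \<Rightarrow> 'm" where
  "mdiff M x y \<equiv> madd M x (mact M y (-1))"

lemma restr_simps [simp]:
  "mcarr (restr M A) = A" "madd (restr M A) = madd M" "mzero (restr M A) = mzero M"
  "mact (restr M A) = mact M"
  by (simp_all add: restr_def)

lemma restr_restr [simp]: "restr (restr M A) B = restr M B"
  by (simp add: restr_def)

lemma restr_mcarr [simp]: "restr M (mcarr M) = M"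
  by (simp add: restr_def)

context
  fixes M :: "('m, 'r::ring_1) rmod"
  assumes M: "rmodule M"
begin

lemma rmodule_zero_closed: "mzero M \<in> mcarr M"
  using M unfolding rmodule_def by (rule conjunct1)

lemma rmodule_add_closed: "x \<in> mcarr M \<Longrightarrow> y \<in> mcarr M \<Longrightarrow> madd M x y \<in> mcarr M"
  using M by (simp add: rmodule_def)

lemma rmodule_act_closed: "x \<in> mcarr M \<Longrightarrow> mact M x r \<in> mcarr M"
  using M unfolding rmodule_def by blast

lemma rmodule_add_assoc:
  "x \<in> mcarr M \<Longrightarrow> y \<in> mcarr M \<Longrightarrow> z \<in> mcarr M \<Longrightarrow>
   madd M (madd M x y) z = madd M x (madd M y z)"
  using M unfolding rmodule_def by blast

lemma rmodule_add_commute: "x \<in> mcarr M \<Longrightarrow> y \<in> mcarr M \<Longrightarrow> madd M x y = madd M y x"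
  using M unfolding rmodule_def by blast

lemma rmodule_add_zero_left: "x \<in> mcarr M \<Longrightarrow> madd M (mzero M) x = x"
  using M unfolding rmodule_def by blast

lemma rmodule_add_inverse_ex: "x \<in> mcarr M \<Longrightarrow> \<exists>y\<in>mcarr M. madd M x y = mzero M"
  using M unfolding rmodule_def by blast

lemma rmodule_act_add:
  "x \<in> mcarr M \<Longrightarrow> y \<in> mcarr M \<Longrightarrow> mact M (madd M x y) r = madd M (mact M x r) (mact M y r)"
  using M unfolding rmodule_def by blast

lemma rmodule_act_scalar_add:
  "x \<in> mcarr M \<Longrightarrow> mact M x (r + s) = madd M (mact M x r) (mact M x s)"
  using M unfolding rmodule_def by blast

lemma rmodule_act_mult: "x \<in> mcarr M \<Longrightarrow> mact M x (r * s) = mact M (mact M x r) s"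
  using M unfolding rmodule_def by blast

lemma rmodule_act_one: "x \<in> mcarr M \<Longrightarrow> mact M x 1 = x"
  using M unfolding rmodule_def by blast

lemma rmodule_add_zero_right: "x \<in> mcarr M \<Longrightarrow> madd M x (mzero M) = x"
  using rmodule_add_zero_left rmodule_add_commute rmodule_zero_closed by metis

lemma rmodule_add_left_cancel:
  assumes "x \<in> mcarr M" "y \<in> mcarr M" "z \<in> mcarr M" "madd M x y = madd M x z"
  shows "y = z"
proof -
  obtain w where w: "w \<in> mcarr M" "madd M w x = mzero M"
    using rmodule_add_inverse_ex assms(1) rmodule_add_commute by metis
  have "y = madd M (madd M w x) y" using w assms rmodule_add_zero_left by simp
  also have "\<dots> = madd M w (madd M x z)" using w assms(1,2,4) rmodule_add_assoc by metis
  also have "\<dots> = z" using w assms(1,3) rmodule_add_assoc rmodule_add_zero_left by metis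
  finally show ?thesis .
qed

lemma rmodule_act_scalar_zero: "x \<in> mcarr M \<Longrightarrow> mact M x 0 = mzero M"
  using rmodule_act_scalar_add[of x 0 0] rmodule_add_zero_right rmodule_add_left_cancel
    rmodule_act_closed rmodule_zero_closed
  by (metis add_0)

lemma rmodule_act_zero: "mact M (mzero M) r = mzero M"
  using rmodule_act_add[of "mzero M" "mzero M" r] rmodule_add_zero_right rmodule_add_left_cancel
    rmodule_act_closed rmodule_zero_closed rmodule_add_zero_left
  by metis

lemma rmodule_diff_self: "x \<in> mcarr M \<Longrightarrow> mdiff M x x = mzero M"
  using rmodule_act_scalar_add[of x 1 "-1"] rmodule_act_one rmodule_act_scalar_zero by simp

lemma rmodule_neg_add_self: "x \<in> mcarr M \<Longrightarrow> madd M (mact M x (-1)) x = mzero M"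
  using rmodule_diff_self rmodule_add_commute rmodule_act_closed by metis

lemma rmodule_neg_neg: "x \<in> mcarr M \<Longrightarrow> mact M (mact M x (-1)) (-1) = x"
  using rmodule_act_mult[of x "-1" "-1"] rmodule_act_one by simp

lemma rmodule_eq_if_diff_zero:
  assumes "x \<in> mcarr M" "y \<in> mcarr M" "mdiff M x y = mzero M"
  shows "x = y"
proof -
  have "x = madd M x (madd M (mact M y (-1)) y)"
    using rmodule_neg_add_self assms rmodule_add_zero_right by simp
  also have "\<dots> = madd M (mdiff M x y) y"
    using rmodule_add_assoc rmodule_act_closed assms(1,2) by simp
  also have "\<dots> = y" using assms rmodule_add_zero_left by simp
  finally show ?thesis .
qed

lemma rmodule_add_interchange:
  assumes "a \<in> mcarr M" "b \<in> mcarr M" "c \<in> mcarr M" "d \<in> mcarr M"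
  shows "madd M (madd M a b) (madd M c d) = madd M (madd M a c) (madd M b d)"
proof -
  have "madd M b (madd M c d) = madd M c (madd M b d)"
    using assms rmodule_add_assoc rmodule_add_commute by metis
  then show ?thesis using assms rmodule_add_assoc rmodule_add_closed by metis
qed

lemma rmodule_neg_diff:
  assumes "x \<in> mcarr M" "y \<in> mcarr M"
  shows "mact M (mdiff M x y) (-1) = mdiff M y x"
  using assms rmodule_act_add rmodule_act_closed rmodule_neg_neg rmodule_add_commute by metis

lemma rmodule_diff_add_diff:
  assumes "x \<in> mcarr M" "y \<in> mcarr M" "z \<in> mcarr M"
  shows "madd M (mdiff M x y) (mdiff M y z) = mdiff M x z"
proof -
  have "madd M (mdiff M x y) (mdiff M y z) =
      madd M x (madd M (madd M (mact M y (-1)) y) (mact M z (-1)))"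
    using assms rmodule_add_assoc rmodule_act_closed rmodule_add_closed by simp
  then show ?thesis
    using assms rmodule_neg_add_self rmodule_add_zero_left rmodule_act_closed by simp
qed

lemma rmodule_act_sum_mem:
  assumes x: "x \<in> mcarr M" and B: "finite B" and Z: "mzero M \<in> Z"
    "\<And>a b. a \<in> Z \<Longrightarrow> b \<in> Z \<Longrightarrow> madd M a b \<in> Z" "\<And>b. b \<in> B \<Longrightarrow> mact M x (f b) \<in> Z"
  shows "mact M x (sum f B) \<in> Z"
  using B Z(3)
proof (induction B rule: finite_induct)
  case empty
  then show ?case using rmodule_act_scalar_zero[OF x] Z(1) by simp
next
  case (insert b B)
  then show ?case using rmodule_act_scalar_add[OF x] Z(2) by simp
qed

end

lemma rmoduleI:
  assumes "mzero M \<in> mcarr M"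
    and "\<And>x y. x \<in> mcarr M \<Longrightarrow> y \<in> mcarr M \<Longrightarrow> madd M x y \<in> mcarr M"
    and "\<And>x r. x \<in> mcarr M \<Longrightarrow> mact M x r \<in> mcarr M"
    and "\<And>x y z. x \<in> mcarr M \<Longrightarrow> y \<in> mcarr M \<Longrightarrow> z \<in> mcarr M \<Longrightarrow>
           madd M (madd M x y) z = madd M x (madd M y z)"
    and "\<And>x y. x \<in> mcarr M \<Longrightarrow> y \<in> mcarr M \<Longrightarrow> madd M x y = madd M y x"
    and "\<And>x. x \<in> mcarr M \<Longrightarrow> madd M (mzero M) x = x"
    and "\<And>x. x \<in> mcarr M \<Longrightarrow> \<exists>y\<in>mcarr M. madd M x y = mzero M"
    and "\<And>x y r. x \<in> mcarr M \<Longrightarrow> y \<in> mcarr M \<Longrightarrow>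
           mact M (madd M x y) r = madd M (mact M x r) (mact M y r)"
    and "\<And>x r s. x \<in> mcarr M \<Longrightarrow> mact M x (r + s) = madd M (mact M x r) (mact M x s)"
    and "\<And>x r s. x \<in> mcarr M \<Longrightarrow> mact M x (r * s) = mact M (mact M x r) s"
    and "\<And>x. x \<in> mcarr M \<Longrightarrow> mact M x 1 = x"
  shows "rmodule M"
  unfolding rmodule_def using assms by (intro conjI ballI allI) simp_all

lemma modlam_rmodule: "modlam M \<Longrightarrow> rmodule M"
  unfolding modlam_def by simp

lemma homD:
  assumes "hom M N f"
  shows "x \<in> mcarr M \<Longrightarrow> f x \<in> mcarr N"
    and "x \<in> mcarr M \<Longrightarrow> y \<in> mcarr M \<Longrightarrow> f (madd M x y) = madd N (f x) (f y)"
    and "x \<in> mcarr M \<Longrightarrow> f (mact M x r) = mact N (f x) r"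
  using assms unfolding hom_def by blast+

lemma homI:
  assumes "\<And>x. x \<in> mcarr M \<Longrightarrow> f x \<in> mcarr N"
    and "\<And>x y. x \<in> mcarr M \<Longrightarrow> y \<in> mcarr M \<Longrightarrow> f (madd M x y) = madd N (f x) (f y)"
    and "\<And>x r. x \<in> mcarr M \<Longrightarrow> f (mact M x r) = mact N (f x) r"
  shows "hom M N f"
  using assms unfolding hom_def by blast

lemma hom_restr:
  assumes "hom M N f" "X \<subseteq> mcarr M" "f ` X \<subseteq> D"
  shows "hom (restr M X) (restr N D) f"
  using assms unfolding hom_def by (simp add: subset_iff image_subset_iff)

lemma hom_restr_source:
  assumes "hom M N f" "X \<subseteq> mcarr M"
  shows "hom (restr M X) N f"
  using assms unfolding hom_def by (simp add: subset_iff)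

lemma hom_id_restr: "X \<subseteq> Y \<Longrightarrow> hom (restr M X) (restr M Y) id"
  unfolding hom_def by auto

lemma hom_diff:
  assumes "rmodule M" "hom M N f" "x \<in> mcarr M" "y \<in> mcarr M"
  shows "f (mdiff M x y) = mdiff N (f x) (f y)"
  using homD(2)[OF assms(2,3) rmodule_act_closed[OF assms(1,4)]] homD(3)[OF assms(2,4)] by simp

lemma hom_zero:
  assumes M: "rmodule M" and N: "rmodule N" and f: "hom M N f"
  shows "f (mzero M) = mzero N"
proof -
  have z: "mzero M \<in> mcarr M" "f (mzero M) \<in> mcarr N"
    using rmodule_zero_closed[OF M] homD(1)[OF f] by blast+
  have "madd N (f (mzero M)) (f (mzero M)) = f (madd M (mzero M) (mzero M))"
    using homD(2)[OF f z(1) z(1)] by simp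
  also have "\<dots> = madd N (f (mzero M)) (mzero N)"
    using rmodule_add_zero_left[OF M z(1)] rmodule_add_zero_right[OF N z(2)] by simp
  finally show ?thesis
    using rmodule_add_left_cancel[OF N] z rmodule_zero_closed[OF N] by blast
qed

lemma hom_eq_iff_diff_in_kern:
  assumes M: "rmodule M" and N: "rmodule N" and f: "hom M N f"
    and x: "x \<in> mcarr M" and y: "y \<in> mcarr M"
  shows "f x = f y \<longleftrightarrow> mdiff M x y \<in> kern M N f"
proof -
  have fxy: "f x \<in> mcarr N" "f y \<in> mcarr N" using homD(1)[OF f] x y by auto
  have "mdiff M x y \<in> mcarr M"
    using x y rmodule_add_closed[OF M] rmodule_act_closed[OF M] by blast
  then have kern_iff: "mdiff M x y \<in> kern M N f \<longleftrightarrow> mdiff N (f x) (f y) = mzero N"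
    using hom_diff[OF M f x y] unfolding kern_def by simp
  show ?thesis
  proof
    assume "f x = f y"
    then show "mdiff M x y \<in> kern M N f" using kern_iff rmodule_diff_self[OF N fxy(2)] by simp
  next
    assume "mdiff M x y \<in> kern M N f"
    then show "f x = f y" using kern_iff rmodule_eq_if_diff_zero[OF N fxy] by simp
  qed
qed

lemma submodD:
  assumes "submod M A"
  shows "A \<subseteq> mcarr M" "mzero M \<in> A"
    and "x \<in> A \<Longrightarrow> y \<in> A \<Longrightarrow> madd M x y \<in> A"
    and "x \<in> A \<Longrightarrow> mact M x r \<in> A"
  using assms unfolding submod_def by blast+

lemma submodI:
  assumes "A \<subseteq> mcarr M" "mzero M \<in> A"
    and "\<And>x y. x \<in> A \<Longrightarrow> y \<in> A \<Longrightarrow> madd M x y \<in> A"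
    and "\<And>x r. x \<in> A \<Longrightarrow> mact M x r \<in> A"
  shows "submod M A"
  using assms unfolding submod_def by blast

lemma submod_restr_iff: "submod M A \<Longrightarrow> submod (restr M A) B \<longleftrightarrow> submod M B \<and> B \<subseteq> A"
  unfolding submod_def by auto

lemma submod_mcarr: "rmodule M \<Longrightarrow> submod M (mcarr M)"
  by (rule submodI) (auto intro: rmodule_zero_closed rmodule_add_closed rmodule_act_closed)

lemma submod_zero: "rmodule M \<Longrightarrow> submod M {mzero M}"
  by (rule submodI) (auto simp: rmodule_zero_closed rmodule_add_zero_left rmodule_act_zero)

lemma submod_Int: "submod M A \<Longrightarrow> submod M B \<Longrightarrow> submod M (A \<inter> B)"
  unfolding submod_def by blast

lemma rmodule_restr:
  assumes M: "rmodule M" and A: "submod M A"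
  shows "rmodule (restr M A)"
proof -
  note A' = submodD[OF A]
  have carr: "x \<in> A \<Longrightarrow> x \<in> mcarr M" for x using A'(1) by blast
  show ?thesis
  proof (rule rmoduleI; simp only: restr_simps)
    show "\<exists>y\<in>A. madd M x y = mzero M" if "x \<in> A" for x
      using that A'(4) rmodule_diff_self[OF M carr] by blast
    show "madd M x y = madd M y x" if "x \<in> A" "y \<in> A" for x y
      using that carr rmodule_add_commute[OF M] by blast
  qed (use A'(1-4) in \<open>auto intro: carr rmodule_add_assoc[OF M] rmodule_add_zero_left[OF M]
      rmodule_act_add[OF M] rmodule_act_scalar_add[OF M] rmodule_act_mult[OF M] rmodule_act_one[OF M]\<close>)
qed

lemma submod_image:
  assumes "rmodule M" "rmodule N" "hom M N f" "submod M X"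
  shows "submod N (f ` X)"
proof (rule submodI)
  note X = submodD[OF assms(4)] and h = homD[OF assms(3)]
  show "f ` X \<subseteq> mcarr N" using X(1) h(1) by blast
  show "mzero N \<in> f ` X" using X(2) hom_zero[OF assms(1-3)] by (metis imageI)
  show "madd N a b \<in> f ` X" if ab: "a \<in> f ` X" "b \<in> f ` X" for a b
  proof -
    obtain x y where "x \<in> X" "y \<in> X" "a = f x" "b = f y" using ab by blast
    then have "madd N a b = f (madd M x y)" "madd M x y \<in> X"
      using X(1,3) h(2) by (auto simp: subset_iff)
    then show ?thesis by blast
  qed
  show "mact N a r \<in> f ` X" if a: "a \<in> f ` X" for a r
  proof -
    obtain x where "x \<in> X" "a = f x" using a by blast
    then have "mact N a r = f (mact M x r)" "mact M x r \<in> X"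
      using X(1,4) h(3) by (auto simp: subset_iff)
    then show ?thesis by blast
  qed
qed

lemma submod_preimage:
  assumes "rmodule M" "rmodule N" "hom M N f" "submod N D"
  shows "submod M {x \<in> mcarr M. f x \<in> D}"
  using assms hom_zero[OF assms(1-3)] homD[OF assms(3)] submodD[OF assms(4)]
  by (intro submodI) (auto intro: rmodule_zero_closed rmodule_add_closed rmodule_act_closed)

lemma submod_kern:
  assumes "rmodule M" "rmodule N" "hom M N f"
  shows "submod M (kern M N f)"
proof -
  have "kern M N f = {x \<in> mcarr M. f x \<in> {mzero N}}" unfolding kern_def by auto
  then show ?thesis using submod_preimage[OF assms submod_zero[OF assms(2)]] by simp
qed

lemma image_preimage_eq:
  assumes "D \<subseteq> f ` A"
  shows "f ` {x \<in> A. f x \<in> D} = D"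
proof
  show "D \<subseteq> f ` {x \<in> A. f x \<in> D}"
  proof
    fix d assume "d \<in> D"
    then obtain x where "x \<in> A" "d = f x" using assms by blast
    then show "d \<in> f ` {x \<in> A. f x \<in> D}" using \<open>d \<in> D\<close> by blast
  qed
qed blast

lemma rmodule_surj_hom_image:
  assumes M: "rmodule M" and f: "hom M N f" and surj: "f ` mcarr M = mcarr N"
    and zero: "mzero N = f (mzero M)"
  shows "rmodule N"
proof -
  note closed = rmodule_zero_closed[OF M] rmodule_add_closed[OF M] rmodule_act_closed[OF M]
  have add: "madd N (f x) (f y) = f (madd M x y)" if "x \<in> mcarr M" "y \<in> mcarr M" for x y
    using that homD(2)[OF f] by simp
  have act: "mact N (f x) r = f (mact M x r)" if "x \<in> mcarr M" for x r
    using that homD(3)[OF f] by simp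
  have pre: "\<exists>x\<in>mcarr M. a = f x" if "a \<in> mcarr N" for a using that surj by blast
  show ?thesis
  proof (rule rmoduleI)
    show "mzero N \<in> mcarr N" using zero homD(1)[OF f] closed by simp
  next
    fix a b assume "a \<in> mcarr N" "b \<in> mcarr N"
    then obtain x y where xy: "x \<in> mcarr M" "y \<in> mcarr M" and ab: "a = f x" "b = f y"
      using pre by meson
    show "madd N a b \<in> mcarr N" "madd N a b = madd N b a"
      "\<And>r. mact N (madd N a b) r = madd N (mact N a r) (mact N b r)"
      unfolding ab using xy closed homD(1)[OF f] add act rmodule_add_commute[OF M]
        rmodule_act_add[OF M] by simp_all
  next
    fix a b c assume "a \<in> mcarr N" "b \<in> mcarr N" "c \<in> mcarr N"
    then obtain x y z where xyz: "x \<in> mcarr M" "y \<in> mcarr M" "z \<in> mcarr M"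
      and abc: "a = f x" "b = f y" "c = f z"
      using pre by meson
    show "madd N (madd N a b) c = madd N a (madd N b c)"
      unfolding abc using xyz closed add rmodule_add_assoc[OF M] by simp
  next
    fix a r s assume "a \<in> mcarr N"
    then obtain x where x: "x \<in> mcarr M" and a: "a = f x" using pre by blast
    show "mact N a r \<in> mcarr N" "madd N (mzero N) a = a" "mact N a 1 = a"
      "mact N a (r + s) = madd N (mact N a r) (mact N a s)"
      "mact N a (r * s) = mact N (mact N a r) s"
      unfolding a zero using x closed homD(1)[OF f] add act rmodule_add_zero_left[OF M]
        rmodule_act_one[OF M] rmodule_act_scalar_add[OF M] rmodule_act_mult[OF M] by simp_all
    obtain y where "y \<in> mcarr M" "madd M x y = mzero M"
      using rmodule_add_inverse_ex[OF M x] by blast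
    then show "\<exists>b\<in>mcarr N. madd N a b = mzero N"
      unfolding a zero using x add homD(1)[OF f] by metis
  qed
qed

lemma fingen_surj_hom_image:
  assumes M: "rmodule M" and N: "rmodule N" and f: "hom M N f"
    and surj: "f ` mcarr M = mcarr N" and fg: "fingen M"
  shows "fingen N"
proof -
  obtain S where S: "finite S" "S \<subseteq> mcarr M" and gen: "\<And>A. submod M A \<and> S \<subseteq> A \<Longrightarrow> A = mcarr M"
    using fg unfolding fingen_def by blast
  show ?thesis
    unfolding fingen_def
  proof (intro exI[of _ "f ` S"] conjI allI impI)
    show "finite (f ` S)" using S(1) by simp
    show "f ` S \<subseteq> mcarr N" using S(2) surj by blast
    fix A assume A: "submod N A \<and> f ` S \<subseteq> A"
    have pre: "{x \<in> mcarr M. f x \<in> A} = mcarr M"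
      by (rule gen) (use submod_preimage[OF M N f] A S(2) in auto)
    have "mcarr N \<subseteq> A"
    proof
      fix n assume "n \<in> mcarr N"
      then obtain x where "x \<in> mcarr M" "n = f x" using surj by blast
      then show "n \<in> A" using pre by blast
    qed
    then show "A = mcarr N" using submodD(1) A by blast
  qed
qed

section \<open>Quotient modules\<close>

lemma quot_mapD:
  assumes "quot_map M F q T"
  shows "hom M F q" "q ` mcarr M = mcarr F" "kern M F q = T"
  using assms unfolding quot_map_def by blast+

lemma quot_map_onto_image:
  assumes "hom M N f"
  shows "quot_map M (restr N (f ` mcarr M)) f (kern M N f)"
  using hom_restr[OF assms order_refl order_refl] unfolding quot_map_def kern_def by simp

definition quot_rel :: "('m, 'r::ring_1) rmod \<Rightarrow> 'm set \<Rightarrow> 'm \<Rightarrow> 'm \<Rightarrow> bool" where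
  "quot_rel M T x y \<longleftrightarrow> x \<in> mcarr M \<and> y \<in> mcarr M \<and> mdiff M x y \<in> T"

definition quot_rep :: "('m, 'r::ring_1) rmod \<Rightarrow> 'm set \<Rightarrow> 'm \<Rightarrow> 'm" where
  "quot_rep M T x = (SOME y. quot_rel M T x y)"

text \<open>The quotient \<open>M/T\<close> is realised on a set of chosen representatives inside \<open>M\<close>, so
  that it lives in the same universe type as \<open>M\<close>.\<close>

definition quot_mod :: "('m, 'r::ring_1) rmod \<Rightarrow> 'm set \<Rightarrow> ('m, 'r) rmod" where
  "quot_mod M T = \<lparr>mcarr = quot_rep M T ` mcarr M, madd = (\<lambda>a b. quot_rep M T (madd M a b)),
     mzero = quot_rep M T (mzero M), mact = (\<lambda>a r. quot_rep M T (mact M a r))\<rparr>"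

context
  fixes M :: "('m, 'r::ring_1) rmod" and T :: "'m set"
  assumes M: "rmodule M" and T: "submod M T"
begin

lemma quot_rel_refl: "x \<in> mcarr M \<Longrightarrow> quot_rel M T x x"
  unfolding quot_rel_def using rmodule_diff_self[OF M] submodD(2)[OF T] by simp

lemma quot_rel_sym: "quot_rel M T x y \<Longrightarrow> quot_rel M T y x"
  unfolding quot_rel_def
  using rmodule_neg_diff[OF M, of x y] submodD(4)[OF T, of "mdiff M x y" "-1"] by auto

lemma quot_rel_trans: "quot_rel M T x y \<Longrightarrow> quot_rel M T y z \<Longrightarrow> quot_rel M T x z"
  unfolding quot_rel_def
  using rmodule_diff_add_diff[OF M, of x y z] submodD(3)[OF T, of "mdiff M x y" "mdiff M y z"]
  by auto

lemma quot_rel_add: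
  assumes "quot_rel M T x x'" "quot_rel M T y y'"
  shows "quot_rel M T (madd M x y) (madd M x' y')"
proof -
  have carr: "x \<in> mcarr M" "x' \<in> mcarr M" "y \<in> mcarr M" "y' \<in> mcarr M"
    using assms unfolding quot_rel_def by auto
  have "mdiff M (madd M x y) (madd M x' y') = madd M (mdiff M x x') (mdiff M y y')"
    using rmodule_act_add[OF M carr(2,4)] rmodule_add_interchange[OF M carr(1,3)]
      rmodule_act_closed[OF M] carr by simp
  then show ?thesis
    using assms submodD(3)[OF T] carr rmodule_add_closed[OF M] unfolding quot_rel_def by simp
qed

lemma quot_rel_act:
  assumes "quot_rel M T x x'"
  shows "quot_rel M T (mact M x r) (mact M x' r)"
proof -
  have carr: "x \<in> mcarr M" "x' \<in> mcarr M" using assms unfolding quot_rel_def by auto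
  have "mact M (mact M x' (-1)) r = mact M (mact M x' r) (-1)"
    using rmodule_act_mult[OF M carr(2), of "-1" r] rmodule_act_mult[OF M carr(2), of r "-1"]
    by simp
  then have "mdiff M (mact M x r) (mact M x' r) = mact M (mdiff M x x') r"
    using rmodule_act_add[OF M carr(1) rmodule_act_closed[OF M carr(2)]] by simp
  then show ?thesis
    using assms submodD(4)[OF T] carr rmodule_act_closed[OF M] unfolding quot_rel_def by simp
qed

lemma quot_rel_quot_rep: "x \<in> mcarr M \<Longrightarrow> quot_rel M T x (quot_rep M T x)"
  unfolding quot_rep_def using quot_rel_refl by (rule someI)

lemma quot_rep_closed: "x \<in> mcarr M \<Longrightarrow> quot_rep M T x \<in> mcarr M"
  using quot_rel_quot_rep unfolding quot_rel_def by blast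

lemma quot_rep_eq_iff:
  assumes "x \<in> mcarr M" "y \<in> mcarr M"
  shows "quot_rep M T x = quot_rep M T y \<longleftrightarrow> quot_rel M T x y"
proof
  assume "quot_rep M T x = quot_rep M T y"
  then have "quot_rel M T x (quot_rep M T y)" using quot_rel_quot_rep[OF assms(1)] by simp
  then show "quot_rel M T x y"
    using quot_rel_trans quot_rel_sym quot_rel_quot_rep[OF assms(2)] by blast
next
  assume "quot_rel M T x y"
  then have "quot_rel M T x = quot_rel M T y" using quot_rel_sym quot_rel_trans by blast
  then show "quot_rep M T x = quot_rep M T y" unfolding quot_rep_def by simp
qed

lemma quot_mod_simps:
  "mcarr (quot_mod M T) = quot_rep M T ` mcarr M"
  "madd (quot_mod M T) = (\<lambda>a b. quot_rep M T (madd M a b))"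
  "mzero (quot_mod M T) = quot_rep M T (mzero M)"
  "mact (quot_mod M T) = (\<lambda>a r. quot_rep M T (mact M a r))"
  by (simp_all add: quot_mod_def)

lemma hom_quot_rep: "hom M (quot_mod M T) (quot_rep M T)"
proof (rule homI)
  fix x y assume xy: "x \<in> mcarr M" "y \<in> mcarr M"
  have "quot_rel M T (madd M x y) (madd M (quot_rep M T x) (quot_rep M T y))"
    using quot_rel_add quot_rel_quot_rep xy by blast
  then show "quot_rep M T (madd M x y) = madd (quot_mod M T) (quot_rep M T x) (quot_rep M T y)"
    using quot_rep_eq_iff xy rmodule_add_closed[OF M] quot_rep_closed by (simp add: quot_mod_simps)
next
  fix x r assume x: "x \<in> mcarr M"
  have "quot_rel M T (mact M x r) (mact M (quot_rep M T x) r)"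
    using quot_rel_act quot_rel_quot_rep x by blast
  then show "quot_rep M T (mact M x r) = mact (quot_mod M T) (quot_rep M T x) r"
    using quot_rep_eq_iff x rmodule_act_closed[OF M] quot_rep_closed by (simp add: quot_mod_simps)
qed (simp add: quot_mod_simps)

lemma kern_quot_rep: "kern M (quot_mod M T) (quot_rep M T) = T"
proof -
  have "quot_rep M T x = quot_rep M T (mzero M) \<longleftrightarrow> x \<in> T" if "x \<in> mcarr M" for x
    using that quot_rep_eq_iff[OF that rmodule_zero_closed[OF M]] rmodule_act_zero[OF M]
      rmodule_add_zero_right[OF M] unfolding quot_rel_def by (simp add: rmodule_zero_closed[OF M])
  then show ?thesis unfolding kern_def quot_mod_simps using submodD(1)[OF T] by blast
qed

lemma quot_map_quot_mod: "quot_map M (quot_mod M T) (quot_rep M T) T"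
  unfolding quot_map_def using hom_quot_rep kern_quot_rep by (simp add: quot_mod_simps)

lemma modlam_quot_mod: "modlam M \<Longrightarrow> modlam (quot_mod M T)"
proof -
  have "rmodule (quot_mod M T)"
    by (rule rmodule_surj_hom_image[OF M hom_quot_rep]) (simp_all add: quot_mod_simps)
  then show "modlam M \<Longrightarrow> modlam (quot_mod M T)"
    using fingen_surj_hom_image[OF M _ hom_quot_rep] unfolding modlam_def
    by (simp add: quot_mod_simps)
qed

end


section \<open>Finite-dimensional modules satisfy the maximum condition\<close>

lemma fd_algebraD:
  assumes "fd_algebra \<iota>"
  shows fd_algebra_one: "\<iota> 1 = 1"
    and fd_algebra_add: "\<iota> (a + b) = \<iota> a + \<iota> b"
    and fd_algebra_mult: "\<iota> (a * b) = \<iota> a * \<iota> b"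
    and fd_algebra_central: "\<iota> a * x = x * \<iota> a"
    and fd_algebra_basis: "\<exists>B. finite B \<and> (\<forall>x. \<exists>c. x = (\<Sum>b\<in>B. \<iota> (c b) * b))"
  using assms unfolding fd_algebra_def by blast+

lemma fd_algebra_zero: "fd_algebra \<iota> \<Longrightarrow> \<iota> 0 = 0"
  using fd_algebra_add[of \<iota> 0 0] by simp

lemma fd_algebra_minus_one:
  assumes "fd_algebra \<iota>"
  shows "\<iota> (-1) = -1"
proof -
  have "\<iota> (-1) + 1 = 0"
    using fd_algebra_add[OF assms, of "-1" 1] fd_algebra_one[OF assms] fd_algebra_zero[OF assms]
    by simp
  then show ?thesis by (simp add: eq_neg_iff_add_eq_0)
qed

text \<open>\<open>kspan M \<iota> W U\<close> is \<open>W\<close> plus the \<open>k\<close>-linear span of \<open>U\<close>, where the field \<open>k\<close> acts on \<open>M\<close>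
  through \<open>\<iota>\<close>; \<open>codim M \<iota> W\<close> is the \<open>k\<close>-codimension of \<open>W\<close> in \<open>M\<close> (and \<open>0\<close> if \<open>M/W\<close> is not
  finite-dimensional).\<close>

inductive_set kspan :: "('m, 'r::ring_1) rmod \<Rightarrow> ('k \<Rightarrow> 'r) \<Rightarrow> 'm set \<Rightarrow> 'm set \<Rightarrow> 'm set"
  for M \<iota> W U where
  kspan_base: "x \<in> W \<Longrightarrow> x \<in> kspan M \<iota> W U"
| kspan_gen: "u \<in> U \<Longrightarrow> mact M u (\<iota> a) \<in> kspan M \<iota> W U"
| kspan_add: "x \<in> kspan M \<iota> W U \<Longrightarrow> y \<in> kspan M \<iota> W U \<Longrightarrow> madd M x y \<in> kspan M \<iota> W U"

definition codim :: "('m, 'r::ring_1) rmod \<Rightarrow> ('k \<Rightarrow> 'r) \<Rightarrow> 'm set \<Rightarrow> nat" where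
  "codim M \<iota> W =
     (LEAST n. \<exists>U. finite U \<and> U \<subseteq> mcarr M \<and> card U = n \<and> mcarr M \<subseteq> kspan M \<iota> W U)"

lemma kspan_mono:
  assumes "W \<subseteq> W'" "U \<subseteq> U'"
  shows "kspan M \<iota> W U \<subseteq> kspan M \<iota> W' U'"
proof
  fix x assume "x \<in> kspan M \<iota> W U"
  then show "x \<in> kspan M \<iota> W' U'"
    by induction (use assms in \<open>auto intro: kspan.intros\<close>)
qed

lemma kspan_subset_mcarr:
  assumes M: "rmodule M" and "W \<subseteq> mcarr M" "U \<subseteq> mcarr M"
  shows "kspan M \<iota> W U \<subseteq> mcarr M"
proof
  fix x assume "x \<in> kspan M \<iota> W U"
  then show "x \<in> mcarr M"
    by induction (use assms rmodule_act_closed[OF M] rmodule_add_closed[OF M] in auto)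
qed

lemma kspan_empty:
  assumes "submod M W" "x \<in> kspan M \<iota> W {}"
  shows "x \<in> W"
  using assms(2) by induction (use submodD(3)[OF assms(1)] in auto)

context
  fixes M :: "('m, 'r::ring_1) rmod" and \<iota> :: "'k::field \<Rightarrow> 'r"
  assumes M: "rmodule M" and fd: "fd_algebra \<iota>"
begin

lemma mem_kspan:
  assumes "u \<in> U" "u \<in> mcarr M"
  shows "u \<in> kspan M \<iota> W U"
proof -
  have "mact M u (\<iota> 1) \<in> kspan M \<iota> W U" using assms(1) by (rule kspan_gen)
  then show ?thesis using fd_algebra_one[OF fd] rmodule_act_one[OF M assms(2)] by simp
qed

lemma kspan_act:
  assumes W: "submod M W" and U: "U \<subseteq> mcarr M" and x: "x \<in> kspan M \<iota> W U"
  shows "mact M x (\<iota> a) \<in> kspan M \<iota> W U"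
  using x
proof induction
  case (kspan_base x)
  then show ?case using submodD(4)[OF W] by (blast intro: kspan.intros)
next
  case (kspan_gen u b)
  then have "mact M (mact M u (\<iota> b)) (\<iota> a) = mact M u (\<iota> (b * a))"
    using rmodule_act_mult[OF M, of u] U fd_algebra_mult[OF fd] by auto
  then show ?case using kspan_gen by (simp add: kspan.kspan_gen)
next
  case (kspan_add x y)
  then have "x \<in> mcarr M" "y \<in> mcarr M"
    using kspan_subset_mcarr[OF M submodD(1)[OF W] U] by auto
  then show ?case using rmodule_act_add[OF M] kspan_add by (simp add: kspan.kspan_add)
qed

lemma kspan_subset_kspan:
  assumes W: "submod M W" and U0: "U0 \<subseteq> mcarr M" and U: "U \<subseteq> kspan M \<iota> W U0"
  shows "kspan M \<iota> W U \<subseteq> kspan M \<iota> W U0"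
proof
  fix x assume "x \<in> kspan M \<iota> W U"
  then show "x \<in> kspan M \<iota> W U0"
    by induction (use kspan_act[OF W U0] U in \<open>auto intro: kspan.intros\<close>)
qed

lemma kspan_insert_decomp:
  assumes W: "submod M W" and U0: "U0 \<subseteq> mcarr M" and u: "u \<in> mcarr M"
    and x: "x \<in> kspan M \<iota> W (insert u U0)"
  shows "\<exists>a y. y \<in> kspan M \<iota> W U0 \<and> x = madd M (mact M u (\<iota> a)) y"
  using x
proof induction
  have u0: "mact M u (\<iota> 0) = mzero M"
    using fd_algebra_zero[OF fd] rmodule_act_scalar_zero[OF M u] by simp
  {
    case (kspan_base x)
    then have "x = madd M (mact M u (\<iota> 0)) x"
      using u0 submodD(1)[OF W] rmodule_add_zero_left[OF M] by auto
    then show ?case using kspan_base by (blast intro: kspan.kspan_base)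
  next
    case (kspan_gen v b)
    show ?case
    proof (cases "v = u")
      case True
      then have "mact M v (\<iota> b) = madd M (mact M u (\<iota> b)) (mzero M)"
        using rmodule_add_zero_right[OF M] rmodule_act_closed[OF M u] by simp
      then show ?thesis using submodD(2)[OF W] by (blast intro: kspan.kspan_base)
    next
      case False
      then have v: "v \<in> U0" "v \<in> mcarr M" using kspan_gen U0 by auto
      then have "mact M v (\<iota> b) = madd M (mact M u (\<iota> 0)) (mact M v (\<iota> b))"
        using u0 rmodule_add_zero_left[OF M] rmodule_act_closed[OF M] by simp
      then show ?thesis using v(1) by (blast intro: kspan.kspan_gen)
    qed
  next
    case (kspan_add x1 x2)
    obtain a1 y1 where 1: "y1 \<in> kspan M \<iota> W U0" "x1 = madd M (mact M u (\<iota> a1)) y1"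
      using kspan_add.IH(1) by blast
    obtain a2 y2 where 2: "y2 \<in> kspan M \<iota> W U0" "x2 = madd M (mact M u (\<iota> a2)) y2"
      using kspan_add.IH(2) by blast
    have "y1 \<in> mcarr M" "y2 \<in> mcarr M"
      using 1 2 kspan_subset_mcarr[OF M submodD(1)[OF W] U0] by auto
    then have "madd M x1 x2 = madd M (mact M u (\<iota> (a1 + a2))) (madd M y1 y2)"
      unfolding 1(2) 2(2)
      using rmodule_add_interchange[OF M] rmodule_act_closed[OF M u] rmodule_act_scalar_add[OF M u]
        fd_algebra_add[OF fd] by simp
    then show ?case using 1(1) 2(1) by (blast intro: kspan.kspan_add)
  }
qed

lemma mem_kspan_of_nonzero_coeff:
  assumes W: "submod M W" and U: "U \<subseteq> mcarr M" and u: "u \<in> mcarr M" and "a \<noteq> 0"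
    and x: "madd M (mact M u (\<iota> a)) y \<in> kspan M \<iota> W U" and y: "y \<in> kspan M \<iota> W U"
  shows "u \<in> kspan M \<iota> W U"
proof -
  let ?x = "madd M (mact M u (\<iota> a)) y"
  have yM: "y \<in> mcarr M" using y kspan_subset_mcarr[OF M submodD(1)[OF W] U] by auto
  have "mact M (mdiff M ?x y) (\<iota> (inverse a)) = mact M (mact M u (\<iota> a)) (\<iota> (inverse a))"
    using rmodule_add_assoc[OF M] rmodule_act_closed[OF M] u yM rmodule_diff_self[OF M yM]
      rmodule_add_zero_right[OF M] by simp
  also have "\<dots> = mact M u (\<iota> (a * inverse a))"
    using rmodule_act_mult[OF M u] fd_algebra_mult[OF fd] by simp
  also have "\<dots> = u" using \<open>a \<noteq> 0\<close> fd_algebra_one[OF fd] rmodule_act_one[OF M u] by simp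
  finally have u_eq: "mact M (mdiff M ?x y) (\<iota> (inverse a)) = u" .
  have "mact M y (\<iota> (-1)) \<in> kspan M \<iota> W U" using kspan_act[OF W U y] .
  then have "mdiff M ?x y \<in> kspan M \<iota> W U"
    using x fd_algebra_minus_one[OF fd] by (simp add: kspan.kspan_add)
  then show ?thesis using kspan_act[OF W U] u_eq by metis
qed

lemma kspan_exchange:
  assumes W: "submod M W" and W': "submod M W'" and WW': "W \<subseteq> W'"
    and U: "finite U" "U \<subseteq> mcarr M"
    and x: "x \<in> kspan M \<iota> W U" "x \<notin> W" "x \<in> W'"
  shows "\<exists>u\<in>U. u \<in> kspan M \<iota> W' (U - {u})"
  using U x
proof (induction U arbitrary: x rule: finite_induct)
  case empty
  then show ?case using kspan_empty[OF W] by blast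
next
  case (insert u U0)
  have u: "u \<in> mcarr M" and U0: "U0 \<subseteq> mcarr M" using insert.prems by auto
  obtain a y where y: "y \<in> kspan M \<iota> W U0" and xy: "x = madd M (mact M u (\<iota> a)) y"
    using kspan_insert_decomp[OF W U0 u insert.prems(2)] by blast
  show ?case
  proof (cases "a = 0")
    case True
    have "y \<in> mcarr M" using y kspan_subset_mcarr[OF M submodD(1)[OF W] U0] by auto
    then have "x = y"
      using xy True fd_algebra_zero[OF fd] rmodule_act_scalar_zero[OF M u]
        rmodule_add_zero_left[OF M] by simp
    then obtain u' where "u' \<in> U0" "u' \<in> kspan M \<iota> W' (U0 - {u'})"
      using insert.IH[OF U0 y] insert.prems(3,4) by blast
    moreover have "kspan M \<iota> W' (U0 - {u'}) \<subseteq> kspan M \<iota> W' (insert u U0 - {u'})"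
      by (rule kspan_mono) auto
    ultimately show ?thesis by blast
  next
    case False
    have "x \<in> kspan M \<iota> W' U0" "y \<in> kspan M \<iota> W' U0"
      using insert.prems(4) y kspan_mono[OF WW', of U0 U0] by (auto intro: kspan_base)
    then have "u \<in> kspan M \<iota> W' U0" using mem_kspan_of_nonzero_coeff[OF W' U0 u False] xy by simp
    moreover have "insert u U0 - {u} = U0" using insert.hyps(2) by blast
    ultimately show ?thesis by auto
  qed
qed

lemma codim_witness:
  assumes "finite U" "U \<subseteq> mcarr M" "mcarr M \<subseteq> kspan M \<iota> W U"
  shows "\<exists>U'. finite U' \<and> U' \<subseteq> mcarr M \<and> card U' = codim M \<iota> W \<and> mcarr M \<subseteq> kspan M \<iota> W U'"
proof -
  let ?P = "\<lambda>n. \<exists>U. finite U \<and> U \<subseteq> mcarr M \<and> card U = n \<and> mcarr M \<subseteq> kspan M \<iota> W U"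
  have "?P (card U)" using assms by blast
  then have "?P (LEAST n. ?P n)" by (rule LeastI)
  then show ?thesis unfolding codim_def .
qed

lemma codim_le_card:
  assumes "finite U" "U \<subseteq> mcarr M" "mcarr M \<subseteq> kspan M \<iota> W U"
  shows "codim M \<iota> W \<le> card U"
proof -
  let ?P = "\<lambda>n. \<exists>U. finite U \<and> U \<subseteq> mcarr M \<and> card U = n \<and> mcarr M \<subseteq> kspan M \<iota> W U"
  have "?P (card U)" using assms by blast
  then show ?thesis unfolding codim_def by (rule Least_le)
qed

lemma codim_strict_antimono:
  assumes W: "submod M W" and W': "submod M W'" and WW': "W \<subset> W'"
    and fin: "finite U0" "U0 \<subseteq> mcarr M" "mcarr M \<subseteq> kspan M \<iota> W U0"
  shows "codim M \<iota> W' < codim M \<iota> W"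
proof -
  obtain U where U: "finite U" "U \<subseteq> mcarr M" "card U = codim M \<iota> W"
    and span: "mcarr M \<subseteq> kspan M \<iota> W U"
    using codim_witness[OF fin] by blast
  obtain w where w: "w \<in> W'" "w \<notin> W" using WW' by blast
  then have "w \<in> kspan M \<iota> W U" using span submodD(1)[OF W'] by blast
  then obtain u where u: "u \<in> U" "u \<in> kspan M \<iota> W' (U - {u})"
    using kspan_exchange[OF W W' _ U(1,2) _ w(2,1)] WW' by blast
  have U': "finite (U - {u})" "U - {u} \<subseteq> mcarr M" using U(1,2) by auto
  have "U \<subseteq> kspan M \<iota> W' (U - {u})"
    using u U(2) mem_kspan[of _ "U - {u}" W'] by blast
  then have "kspan M \<iota> W' U \<subseteq> kspan M \<iota> W' (U - {u})"
    using kspan_subset_kspan[OF W' U'(2)] by blast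
  moreover have "kspan M \<iota> W U \<subseteq> kspan M \<iota> W' U" using kspan_mono WW' by blast
  ultimately have "mcarr M \<subseteq> kspan M \<iota> W' (U - {u})" using span by blast
  then have "codim M \<iota> W' \<le> card (U - {u})" by (rule codim_le_card[OF U'])
  also have "\<dots> < codim M \<iota> W" using card_Diff1_less[OF U(1) u(1)] U(3) by simp
  finally show ?thesis .
qed

lemma act_mem_kspan:
  assumes s: "s \<in> mcarr M" and B: "finite B" "\<forall>x. \<exists>c. x = (\<Sum>b\<in>B. \<iota> (c b) * b)"
    and V: "(\<lambda>b. mact M s b) ` B \<subseteq> V" and W: "mzero M \<in> W"
  shows "mact M s r \<in> kspan M \<iota> W V"
proof -
  obtain c where c: "r = (\<Sum>b\<in>B. \<iota> (c b) * b)" using B(2) by blast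
  have terms: "mact M s (\<iota> (c b) * b) \<in> kspan M \<iota> W V" if "b \<in> B" for b
  proof -
    have "mact M s (\<iota> (c b) * b) = mact M (mact M s b) (\<iota> (c b))"
      using fd_algebra_central[OF fd] rmodule_act_mult[OF M s] by simp
    then show ?thesis using that V by (auto intro: kspan_gen)
  qed
  show ?thesis
    unfolding c by (rule rmodule_act_sum_mem[OF M s B(1) kspan_base[OF W] kspan_add terms])
qed

lemma submod_kspan_zero:
  assumes V: "V \<subseteq> mcarr M"
    and act: "\<And>v a r. v \<in> V \<Longrightarrow> mact M (mact M v (\<iota> a)) r \<in> kspan M \<iota> {mzero M} V"
  shows "submod M (kspan M \<iota> {mzero M} V)"
proof (rule submodI)
  show sub: "kspan M \<iota> {mzero M} V \<subseteq> mcarr M"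
    by (rule kspan_subset_mcarr[OF M]) (use V rmodule_zero_closed[OF M] in auto)
  show "mact M x r \<in> kspan M \<iota> {mzero M} V" if "x \<in> kspan M \<iota> {mzero M} V" for x r
    using that
  proof induction
    case (kspan_add x y)
    then have "x \<in> mcarr M" "y \<in> mcarr M" using sub by auto
    then show ?case using rmodule_act_add[OF M] kspan_add by (simp add: kspan.kspan_add)
  qed (use act rmodule_act_zero[OF M] in \<open>simp_all add: kspan.kspan_base\<close>)
qed (auto intro: kspan.intros)

lemma modlam_finite_kspan:
  assumes "modlam M"
  shows "\<exists>V. finite V \<and> V \<subseteq> mcarr M \<and> mcarr M \<subseteq> kspan M \<iota> {mzero M} V"
proof -
  obtain S where S: "finite S" "S \<subseteq> mcarr M" and gen: "\<And>A. submod M A \<and> S \<subseteq> A \<Longrightarrow> A = mcarr M"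
    using assms unfolding modlam_def fingen_def by blast
  obtain B where B: "finite B" "\<forall>x. \<exists>c. x = (\<Sum>b\<in>B. \<iota> (c b) * b)"
    using fd_algebra_basis[OF fd] by blast
  define V where "V = (\<lambda>(s, b). mact M s b) ` (S \<times> B)"
  have V: "finite V" "V \<subseteq> mcarr M"
    unfolding V_def using S B(1) rmodule_act_closed[OF M] by auto
  have S_act: "mact M s r \<in> kspan M \<iota> {mzero M} V" if "s \<in> S" for s r
  proof -
    have "(\<lambda>b. mact M s b) ` B \<subseteq> V" unfolding V_def using that by auto
    then show ?thesis using act_mem_kspan[OF _ B] that S(2) by blast
  qed
  have "submod M (kspan M \<iota> {mzero M} V)"
  proof (rule submod_kspan_zero[OF V(2)])
    fix v a r assume "v \<in> V"
    then obtain s b where sb: "s \<in> S" "v = mact M s b" unfolding V_def by auto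
    then have "mact M (mact M v (\<iota> a)) r = mact M s (b * \<iota> a * r)"
      using S(2) rmodule_act_mult[OF M] rmodule_act_closed[OF M] by auto
    then show "mact M (mact M v (\<iota> a)) r \<in> kspan M \<iota> {mzero M} V" using S_act[OF sb(1)] by simp
  qed
  moreover have "S \<subseteq> kspan M \<iota> {mzero M} V"
    using S_act[of _ 1] rmodule_act_one[OF M] S(2) by (metis subsetI subsetD)
  ultimately show ?thesis using gen V by blast
qed

lemma modlam_maximal_submod:
  assumes "modlam M" and "A0 \<in> F" and sub: "\<And>A. A \<in> F \<Longrightarrow> submod M A"
  shows "\<exists>T\<in>F. \<forall>A\<in>F. T \<subseteq> A \<longrightarrow> A = T"
proof -
  obtain T where T: "T \<in> F" and least: "\<And>A. A \<in> F \<Longrightarrow> codim M \<iota> T \<le> codim M \<iota> A"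
    using ex_has_least_nat[of "\<lambda>A. A \<in> F" A0 "codim M \<iota>"] assms(2) by blast
  obtain V where V: "finite V" "V \<subseteq> mcarr M" "mcarr M \<subseteq> kspan M \<iota> {mzero M} V"
    using modlam_finite_kspan[OF assms(1)] by blast
  then have "mcarr M \<subseteq> kspan M \<iota> T V"
    using kspan_mono[of "{mzero M}" T V V] submodD(2)[OF sub[OF T]] by blast
  then have "\<not> T \<subset> A" if "A \<in> F" for A
    using codim_strict_antimono[OF sub[OF T] sub[OF that] _ V(1,2)] least[OF that] by fastforce
  then show ?thesis using T by blast
qed

end

definition gen_submod :: "('m, 'r) rmod \<Rightarrow> 'm set \<Rightarrow> 'm set" where
  "gen_submod M S = \<Inter>{A. submod M A \<and> S \<subseteq> A}"

lemma submod_gen_submod: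
  assumes "rmodule M" "S \<subseteq> mcarr M"
  shows "submod M (gen_submod M S)"
proof (rule submodI)
  show "gen_submod M S \<subseteq> mcarr M"
    using submod_mcarr[OF assms(1)] assms(2) unfolding gen_submod_def by blast
qed (auto simp: gen_submod_def dest: submodD)

lemma gen_submod_superset: "S \<subseteq> gen_submod M S"
  unfolding gen_submod_def by blast

lemma gen_submod_least: "submod M A \<Longrightarrow> S \<subseteq> A \<Longrightarrow> gen_submod M S \<subseteq> A"
  unfolding gen_submod_def by blast

lemma fingen_restr_gen_submod:
  assumes M: "rmodule M" and S: "finite S" "S \<subseteq> mcarr M"
  shows "fingen (restr M (gen_submod M S))"
  unfolding fingen_def
proof (intro exI conjI allI impI)
  fix A assume A: "submod (restr M (gen_submod M S)) A \<and> S \<subseteq> A"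
  then have "submod M A" "A \<subseteq> gen_submod M S"
    using submod_restr_iff[OF submod_gen_submod[OF M S(2)]] by blast+
  then show "A = mcarr (restr M (gen_submod M S))" using gen_submod_least[of M A S] A by auto
qed (use S gen_submod_superset[of S M] in auto)

text \<open>A maximal finitely generated submodule of \<open>X\<close> must be all of \<open>X\<close>.\<close>

lemma modlam_restr:
  fixes M :: "('m, 'r::ring_1) rmod" and \<iota> :: "'k::field \<Rightarrow> 'r"
  assumes fd: "fd_algebra \<iota>" and "modlam M" and X: "submod M X"
  shows "modlam (restr M X)"
proof -
  have M: "rmodule M" using \<open>modlam M\<close> by (rule modlam_rmodule)
  have XM: "X \<subseteq> mcarr M" using X by (rule submodD)
  define F where "F = {gen_submod M S | S. finite S \<and> S \<subseteq> X}"
  have F_submod: "submod M A" if A: "A \<in> F" for A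
  proof -
    obtain S where "A = gen_submod M S" "S \<subseteq> X" using A unfolding F_def by blast
    then show ?thesis using submod_gen_submod[OF M] XM by blast
  qed
  have "gen_submod M {} \<in> F" unfolding F_def by blast
  then obtain H where "H \<in> F" and H: "\<forall>A\<in>F. H \<subseteq> A \<longrightarrow> A = H"
    using modlam_maximal_submod[OF M fd \<open>modlam M\<close> _ F_submod] by blast
  then obtain S where S: "H = gen_submod M S" "finite S" "S \<subseteq> X" unfolding F_def by blast
  have "X \<subseteq> H"
  proof
    fix x assume "x \<in> X"
    then have "insert x S \<subseteq> mcarr M" using S(3) XM by blast
    then have "S \<subseteq> gen_submod M (insert x S)" "submod M (gen_submod M (insert x S))"
      using gen_submod_superset[of "insert x S" M] submod_gen_submod[OF M] by auto
    then have "H \<subseteq> gen_submod M (insert x S)" unfolding S(1) by (rule gen_submod_least[rotated])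
    moreover have "gen_submod M (insert x S) \<in> F" unfolding F_def using S \<open>x \<in> X\<close> by blast
    ultimately have "gen_submod M (insert x S) = H" using H by blast
    then show "x \<in> H" using gen_submod_superset[of "insert x S" M] by blast
  qed
  moreover have "H \<subseteq> X" using S gen_submod_least[OF X] by blast
  ultimately have "X = gen_submod M S" using S(1) by blast
  moreover have "S \<subseteq> mcarr M" using S(3) XM by blast
  ultimately have "fingen (restr M X)" using fingen_restr_gen_submod[OF M S(2)] by simp
  then show ?thesis unfolding modlam_def using rmodule_restr[OF M X] by simp
qed


section \<open>Strict subobjects in a torsion class\<close>

lemma torsion_classD:
  assumes "torsion_class G"
  shows torsion_class_modlam: "M \<in> G \<Longrightarrow> modlam M"
    and torsion_class_quotient:
      "M \<in> G \<Longrightarrow> modlam N \<Longrightarrow> hom M N f \<Longrightarrow> f ` mcarr M = mcarr N \<Longrightarrow> N \<in> G"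
    and torsion_class_extension:
      "modlam A \<Longrightarrow> modlam B \<Longrightarrow> modlam C \<Longrightarrow> hom A B i \<Longrightarrow> inj_on i (mcarr A) \<Longrightarrow>
       hom B C p \<Longrightarrow> p ` mcarr B = mcarr C \<Longrightarrow> i ` mcarr A = kern B C p \<Longrightarrow> A \<in> G \<Longrightarrow> C \<in> G \<Longrightarrow>
       B \<in> G"
proof -
  note tc = assms[unfolded torsion_class_def]
  from tc have "\<forall>M\<in>G. modlam M" by (elim conjE)
  then show "M \<in> G \<Longrightarrow> modlam M" by simp
  from tc have quot: "\<forall>M N f. M \<in> G \<and> modlam N \<and> hom M N f \<and> f ` mcarr M = mcarr N \<longrightarrow> N \<in> G"
    by (elim conjE)
  show "M \<in> G \<Longrightarrow> modlam N \<Longrightarrow> hom M N f \<Longrightarrow> f ` mcarr M = mcarr N \<Longrightarrow> N \<in> G"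
    using quot[rule_format, of M N f] by simp
  from tc have ext: "\<forall>A B C i p. modlam A \<and> modlam B \<and> modlam C \<and> hom A B i \<and> inj_on i (mcarr A) \<and>
      hom B C p \<and> p ` mcarr B = mcarr C \<and> i ` mcarr A = kern B C p \<and> A \<in> G \<and> C \<in> G \<longrightarrow> B \<in> G"
    by (elim conjE)
  show "modlam A \<Longrightarrow> modlam B \<Longrightarrow> modlam C \<Longrightarrow> hom A B i \<Longrightarrow> inj_on i (mcarr A) \<Longrightarrow>
    hom B C p \<Longrightarrow> p ` mcarr B = mcarr C \<Longrightarrow> i ` mcarr A = kern B C p \<Longrightarrow> A \<in> G \<Longrightarrow> C \<in> G \<Longrightarrow>
    B \<in> G"
    using ext[rule_format, of A B C i p] by simp
qed

lemma torsion_class_rmodule: "torsion_class G \<Longrightarrow> M \<in> G \<Longrightarrow> rmodule M"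
  using torsion_class_modlam modlam_rmodule by blast

lemma torsion_class_quot_map:
  assumes "torsion_class G" "M \<in> G" "modlam F" "quot_map M F q T"
  shows "F \<in> G"
  using torsion_class_quotient[OF assms(1-3)] quot_mapD[OF assms(4)] by blast

lemma strict_subD:
  assumes "strict_sub G M A"
  shows "submod M A" "restr M A \<in> G"
    and "submod M B \<Longrightarrow> restr M B \<in> G \<Longrightarrow> restr M (A \<inter> B) \<in> G"
  using assms unfolding strict_sub_def subobj_def by blast+

lemma strict_subI:
  assumes "submod M A" "restr M A \<in> G"
    and "\<And>B. submod M B \<Longrightarrow> restr M B \<in> G \<Longrightarrow> restr M (A \<inter> B) \<in> G"
  shows "strict_sub G M A"
  using assms unfolding strict_sub_def subobj_def by blast

lemma strict_sub_mcarr: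
  assumes "rmodule M" "M \<in> G"
  shows "strict_sub G M (mcarr M)"
proof (rule strict_subI)
  fix B assume "submod M B" "restr M B \<in> G"
  moreover have "mcarr M \<inter> B = B" using submodD(1)[OF \<open>submod M B\<close>] by blast
  ultimately show "restr M (mcarr M \<inter> B) \<in> G" by simp
qed (use assms submod_mcarr in simp_all)

lemma strict_sub_zero:
  assumes "rmodule M" "restr M {mzero M} \<in> G"
  shows "strict_sub G M {mzero M}"
proof (rule strict_subI)
  fix B assume "submod M B"
  then have "{mzero M} \<inter> B = {mzero M}" using submodD(2) by blast
  then show "restr M ({mzero M} \<inter> B) \<in> G" using assms(2) by simp
qed (use assms submod_zero in simp_all)

lemma strict_sub_restr:
  assumes A: "strict_sub G M A" and B: "submod M B" "restr M B \<in> G"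
  shows "strict_sub G (restr M B) (A \<inter> B)"
proof (rule strict_subI)
  show "submod (restr M B) (A \<inter> B)"
    using submod_restr_iff[OF B(1)] submod_Int[OF strict_subD(1)[OF A] B(1)] by blast
  show "restr (restr M B) (A \<inter> B) \<in> G" using strict_subD(3)[OF A B] by simp
  fix B' assume "submod (restr M B) B'" "restr (restr M B) B' \<in> G"
  then have "submod M B'" "B' \<subseteq> B" "restr M B' \<in> G" using submod_restr_iff[OF B(1)] by auto
  then have "restr M (A \<inter> B') \<in> G" "A \<inter> B \<inter> B' = A \<inter> B'" using strict_subD(3)[OF A] by blast+
  then show "restr (restr M B) (A \<inter> B \<inter> B') \<in> G" by simp
qed

lemma strict_sub_trans:
  assumes C: "strict_sub G M C" and A: "strict_sub G (restr M C) A"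
  shows "strict_sub G M A"
proof (rule strict_subI)
  have A': "submod M A" "A \<subseteq> C"
    using strict_subD(1)[OF A] submod_restr_iff[OF strict_subD(1)[OF C]] by auto
  then show "submod M A" by simp
  show "restr M A \<in> G" using strict_subD(2)[OF A] by simp
  fix B assume B: "submod M B" "restr M B \<in> G"
  have "submod (restr M C) (C \<inter> B)" "restr (restr M C) (C \<inter> B) \<in> G"
    using submod_Int[OF strict_subD(1)[OF C] B(1)] submod_restr_iff[OF strict_subD(1)[OF C]]
      strict_subD(3)[OF C B] by auto
  then have "restr (restr M C) (A \<inter> (C \<inter> B)) \<in> G" by (rule strict_subD(3)[OF A])
  moreover have "A \<inter> (C \<inter> B) = A \<inter> B" using A'(2) by blast
  ultimately show "restr M (A \<inter> B) \<in> G" by simp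
qed

context
  fixes G :: "('m, 'r::ring_1) rmod set" and \<iota> :: "'k::field \<Rightarrow> 'r"
  assumes G: "torsion_class G" and fd: "fd_algebra \<iota>"
begin

lemma torsion_class_restr_image:
  assumes "modlam M" "modlam F" and q: "hom M F q" and X: "submod M X" "restr M X \<in> G"
  shows "restr F (q ` X) \<in> G"
proof (rule torsion_class_quotient[OF G X(2)])
  show "modlam (restr F (q ` X))"
    using modlam_restr[OF fd \<open>modlam F\<close> submod_image[OF _ _ q X(1)]] modlam_rmodule assms(1,2)
    by blast
  show "hom (restr M X) (restr F (q ` X)) q" using hom_restr[OF q submodD(1)[OF X(1)]] by simp
qed simp

lemma torsion_class_restr_extension:
  assumes "modlam M" "modlam F" and q: "hom M F q" and X: "submod M X"
    and ker: "restr M (X \<inter> kern M F q) \<in> G" and img: "restr F (q ` X) \<in> G"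
  shows "restr M X \<in> G"
proof -
  have M: "rmodule M" and F: "rmodule F" using assms(1,2) modlam_rmodule by blast+
  have XM: "X \<subseteq> mcarr M" using X by (rule submodD)
  show ?thesis
  proof (rule torsion_class_extension[OF G _ _ _ _ _ _ _ _ ker img])
    show "modlam (restr M (X \<inter> kern M F q))"
      using modlam_restr[OF fd \<open>modlam M\<close> submod_Int[OF X submod_kern[OF M F q]]] .
    show "modlam (restr M X)" using modlam_restr[OF fd \<open>modlam M\<close> X] .
    show "modlam (restr F (q ` X))" using torsion_class_modlam[OF G img] .
    show "hom (restr M (X \<inter> kern M F q)) (restr M X) id" by (rule hom_id_restr) blast
    show "hom (restr M X) (restr F (q ` X)) q" using hom_restr[OF q XM] by simp
    show "id ` mcarr (restr M (X \<inter> kern M F q)) = kern (restr M X) (restr F (q ` X)) q"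
      using XM unfolding kern_def by auto
  qed simp_all
qed

lemma subobj_preimage:
  assumes "modlam M" "modlam F" and q: "quot_map M F q T" and T: "restr M T \<in> G"
    and D: "submod F D" "restr F D \<in> G"
  shows "submod M {x \<in> mcarr M. q x \<in> D}" "restr M {x \<in> mcarr M. q x \<in> D} \<in> G"
proof -
  note Q = quot_mapD[OF q]
  show pre: "submod M {x \<in> mcarr M. q x \<in> D}"
    using submod_preimage[OF _ _ Q(1) D(1)] modlam_rmodule assms(1,2) by blast
  have "{x \<in> mcarr M. q x \<in> D} \<inter> kern M F q = T"
    using Q(3) submodD(2)[OF D(1)] unfolding kern_def by auto
  moreover have "q ` {x \<in> mcarr M. q x \<in> D} = D"
    using image_preimage_eq Q(2) submodD(1)[OF D(1)] by metis
  ultimately show "restr M {x \<in> mcarr M. q x \<in> D} \<in> G"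
    using torsion_class_restr_extension[OF assms(1,2) Q(1) pre] T D(2) by simp
qed

lemma strict_sub_quot_image:
  assumes "modlam M" "modlam F" and q: "quot_map M F q T" and T: "restr M T \<in> G"
    and Y: "strict_sub G M Y"
  shows "strict_sub G F (q ` Y)"
proof (rule strict_subI)
  note Q = quot_mapD[OF q] and Y' = strict_subD(1,2)[OF Y]
  show "submod F (q ` Y)" using submod_image[OF _ _ Q(1) Y'(1)] modlam_rmodule assms(1,2) by blast
  show "restr F (q ` Y) \<in> G" by (rule torsion_class_restr_image[OF assms(1,2) Q(1) Y'])
  fix D assume D: "submod F D" "restr F D \<in> G"
  let ?P = "{x \<in> mcarr M. q x \<in> D}"
  have P: "submod M ?P" "restr M ?P \<in> G" by (rule subobj_preimage[OF assms(1,2) q T D])+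
  then have "restr F (q ` (Y \<inter> ?P)) \<in> G"
    using torsion_class_restr_image[OF assms(1,2) Q(1) submod_Int[OF Y'(1) P(1)]] strict_subD(3)[OF Y P]
    by blast
  moreover have "q ` (Y \<inter> ?P) = q ` Y \<inter> D" using submodD(1)[OF Y'(1)] by auto
  ultimately show "restr F (q ` Y \<inter> D) \<in> G" by simp
qed

lemma strict_sub_quot_preimage:
  assumes "modlam M" "modlam F" and q: "quot_map M F q T" and T: "strict_sub G M T"
    and D: "strict_sub G F D"
  shows "strict_sub G M {x \<in> mcarr M. q x \<in> D}"
proof -
  note Q = quot_mapD[OF q]
  let ?C = "{x \<in> mcarr M. q x \<in> D}"
  have C: "submod M ?C" "restr M ?C \<in> G"
    by (rule subobj_preimage[OF assms(1,2) q strict_subD(2)[OF T] strict_subD(1,2)[OF D]])+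
  have TC: "T \<subseteq> ?C" using Q(3) submodD(2)[OF strict_subD(1)[OF D]] unfolding kern_def by auto
  show ?thesis
  proof (rule strict_subI[OF C])
    fix B assume B: "submod M B" "restr M B \<in> G"
    have "?C \<inter> B \<inter> kern M F q = T \<inter> B" using TC Q(3) by auto
    then have ker: "restr M (?C \<inter> B \<inter> kern M F q) \<in> G" using strict_subD(3)[OF T B] by simp
    have "submod F (q ` B)"
      using submod_image[OF _ _ Q(1) B(1)] modlam_rmodule assms(1,2) by blast
    moreover have "restr F (q ` B) \<in> G" by (rule torsion_class_restr_image[OF assms(1,2) Q(1) B])
    ultimately have "restr F (D \<inter> q ` B) \<in> G" by (rule strict_subD(3)[OF D])
    moreover have "q ` (?C \<inter> B) = D \<inter> q ` B" using submodD(1)[OF B(1)] by auto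
    ultimately have img: "restr F (q ` (?C \<inter> B)) \<in> G" by simp
    show "restr M (?C \<inter> B) \<in> G"
      by (rule torsion_class_restr_extension[OF assms(1,2) Q(1) submod_Int[OF C(1) B(1)] ker img])
  qed
qed

end

lemma strict_morD:
  assumes "strict_mor G A B f"
  shows "A \<in> G" "B \<in> G" "hom A B f" "strict_sub G A (kern A B f)" "strict_sub G B (f ` mcarr A)"
  using assms unfolding strict_mor_def by blast+

lemma strict_mor_quot_map:
  assumes G: "torsion_class G" and "M \<in> G" "modlam F" and q: "quot_map M F q T"
    and T: "strict_sub G M T"
  shows "strict_mor G M F q"
proof -
  have "F \<in> G" by (rule torsion_class_quot_map[OF G assms(2,3) q])
  then show ?thesis
    unfolding strict_mor_def
    using assms(2) quot_mapD[OF q] T strict_sub_mcarr[OF modlam_rmodule[OF assms(3)]] by simp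
qed

context
  fixes G :: "('m, 'r::ring_1) rmod set" and \<iota> :: "'k::field \<Rightarrow> 'r"
  assumes G: "torsion_class G" and fd: "fd_algebra \<iota>"
begin

lemma strict_mor_image:
  assumes \<phi>: "strict_mor G M N \<phi>" and Y: "strict_sub G M Y"
  shows "strict_sub G N (\<phi> ` Y)"
proof -
  note S = strict_morD[OF \<phi>]
  have I: "modlam (restr N (\<phi> ` mcarr M))"
    using modlam_restr[OF fd _ strict_subD(1)[OF S(5)]] torsion_class_modlam[OF G S(2)] by blast
  have "strict_sub G (restr N (\<phi> ` mcarr M)) (\<phi> ` Y)"
    using strict_sub_quot_image[OF G fd _ I quot_map_onto_image[OF S(3)] strict_subD(2)[OF S(4)] Y]
      torsion_class_modlam[OF G S(1)] by blast
  then show ?thesis by (rule strict_sub_trans[OF S(5)])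
qed

lemma strict_mor_preimage:
  assumes \<phi>: "strict_mor G M N \<phi>" and D: "strict_sub G N D"
  shows "strict_sub G M {x \<in> mcarr M. \<phi> x \<in> D}"
proof -
  note S = strict_morD[OF \<phi>]
  let ?I = "\<phi> ` mcarr M"
  have I: "modlam (restr N ?I)"
    using modlam_restr[OF fd _ strict_subD(1)[OF S(5)]] torsion_class_modlam[OF G S(2)] by blast
  have "strict_sub G (restr N ?I) (D \<inter> ?I)"
    by (rule strict_sub_restr[OF D strict_subD(1,2)[OF S(5)]])
  then have "strict_sub G M {x \<in> mcarr M. \<phi> x \<in> D \<inter> ?I}"
    using strict_sub_quot_preimage[OF G fd _ I quot_map_onto_image[OF S(3)] S(4)]
      torsion_class_modlam[OF G S(1)] by blast
  moreover have "{x \<in> mcarr M. \<phi> x \<in> D \<inter> ?I} = {x \<in> mcarr M. \<phi> x \<in> D}" by auto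
  ultimately show ?thesis by simp
qed

lemma strict_mor_restr:
  assumes \<phi>: "strict_mor G M N \<phi>" and Y: "strict_sub G M Y"
  shows "strict_mor G (restr M Y) N \<phi>"
  unfolding strict_mor_def
proof (intro conjI)
  note S = strict_morD[OF \<phi>] and Y' = strict_subD(1,2)[OF Y]
  show "restr M Y \<in> G" "N \<in> G" "hom (restr M Y) N \<phi>"
    using S Y' hom_restr_source submodD(1) by blast+
  have "kern (restr M Y) N \<phi> = kern M N \<phi> \<inter> Y" using submodD(1)[OF Y'(1)] unfolding kern_def by auto
  then show "strict_sub G (restr M Y) (kern (restr M Y) N \<phi>)"
    using strict_sub_restr[OF S(4) Y'] by simp
  show "strict_sub G N (\<phi> ` mcarr (restr M Y))" using strict_mor_image[OF \<phi> Y] by simp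
qed

end

lemma strict_mor_corestr:
  assumes \<phi>: "strict_mor G M N \<phi>" and D: "strict_sub G N D" and maps_to: "\<phi> ` mcarr M \<subseteq> D"
  shows "strict_mor G M (restr N D) \<phi>"
  unfolding strict_mor_def
proof (intro conjI)
  note S = strict_morD[OF \<phi>] and D' = strict_subD(1,2)[OF D]
  show "M \<in> G" "restr N D \<in> G" using S D' by blast+
  show "hom M (restr N D) \<phi>" using hom_restr[OF S(3) order_refl maps_to] by simp
  show "strict_sub G M (kern M (restr N D) \<phi>)" using S(4) unfolding kern_def by simp
  have "\<phi> ` mcarr M \<inter> D = \<phi> ` mcarr M" using maps_to by blast
  then show "strict_sub G (restr N D) (\<phi> ` mcarr M)" using strict_sub_restr[OF S(5) D'] by simp
qed


section \<open>Maps induced on quotients\<close>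

definition induced_map :: "('m, 'r) rmod \<Rightarrow> ('m \<Rightarrow> 'm) \<Rightarrow> ('m \<Rightarrow> 'm) \<Rightarrow> ('m \<Rightarrow> 'm) \<Rightarrow> 'm \<Rightarrow> 'm" where
  "induced_map M qM qN \<phi> y = qN (\<phi> (SOME x. x \<in> mcarr M \<and> qM x = y))"

context
  fixes M N FM FN :: "('m, 'r::ring_1) rmod" and \<phi> qM qN :: "'m \<Rightarrow> 'm" and TM TN :: "'m set"
  assumes M: "rmodule M" and N: "rmodule N" and FM: "rmodule FM" and FN: "rmodule FN"
    and \<phi>: "hom M N \<phi>" and qM: "quot_map M FM qM TM" and qN: "quot_map N FN qN TN"
    and maps_to: "\<phi> ` TM \<subseteq> TN"
begin

lemma induced_map_quot:
  assumes x: "x \<in> mcarr M"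
  shows "induced_map M qM qN \<phi> (qM x) = qN (\<phi> x)"
proof -
  define x' where "x' = (SOME z. z \<in> mcarr M \<and> qM z = qM x)"
  have x': "x' \<in> mcarr M" "qM x = qM x'"
    using someI[of "\<lambda>z. z \<in> mcarr M \<and> qM z = qM x" x] x unfolding x'_def by auto
  then have "mdiff M x x' \<in> TM"
    using hom_eq_iff_diff_in_kern[OF M FM quot_mapD(1)[OF qM] x] quot_mapD(3)[OF qM] by simp
  then have "mdiff N (\<phi> x) (\<phi> x') \<in> kern N FN qN"
    using maps_to hom_diff[OF M \<phi> x x'(1)] quot_mapD(3)[OF qN] by auto
  then have "qN (\<phi> x) = qN (\<phi> x')"
    using hom_eq_iff_diff_in_kern[OF N FN quot_mapD(1)[OF qN]] homD(1)[OF \<phi>] x x'(1) by blast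
  then show ?thesis unfolding induced_map_def x'_def by simp
qed

lemma induced_map_cases:
  assumes "y \<in> mcarr FM"
  obtains x where "x \<in> mcarr M" "y = qM x"
  using assms quot_mapD(2)[OF qM] by blast

lemma hom_induced_map: "hom FM FN (induced_map M qM qN \<phi>)"
proof (rule homI)
  note hM = homD[OF quot_mapD(1)[OF qM]] and hN = homD[OF quot_mapD(1)[OF qN]] and h\<phi> = homD[OF \<phi>]
  fix y assume "y \<in> mcarr FM"
  then obtain x where x: "x \<in> mcarr M" "y = qM x" by (rule induced_map_cases)
  then show "induced_map M qM qN \<phi> y \<in> mcarr FN" using induced_map_quot hN(1) h\<phi>(1) by simp
  show "induced_map M qM qN \<phi> (mact FM y r) = mact FN (induced_map M qM qN \<phi> y) r" for r
    using x induced_map_quot hM(3)[symmetric] hN(3) h\<phi>(1,3) rmodule_act_closed[OF M] by simp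
next
  note hM = homD[OF quot_mapD(1)[OF qM]] and hN = homD[OF quot_mapD(1)[OF qN]] and h\<phi> = homD[OF \<phi>]
  fix y1 y2 assume "y1 \<in> mcarr FM" "y2 \<in> mcarr FM"
  then obtain x1 x2 where x: "x1 \<in> mcarr M" "y1 = qM x1" "x2 \<in> mcarr M" "y2 = qM x2"
    by (metis induced_map_cases)
  then show "induced_map M qM qN \<phi> (madd FM y1 y2) =
      madd FN (induced_map M qM qN \<phi> y1) (induced_map M qM qN \<phi> y2)"
    using induced_map_quot hM(2)[symmetric] hN(2) h\<phi>(1,2) rmodule_add_closed[OF M] by simp
qed

lemma kern_induced_map:
  "kern FM FN (induced_map M qM qN \<phi>) = qM ` {x \<in> mcarr M. \<phi> x \<in> TN}"
proof -
  have "induced_map M qM qN \<phi> (qM x) = mzero FN \<longleftrightarrow> \<phi> x \<in> TN" if "x \<in> mcarr M" for x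
    using that induced_map_quot quot_mapD(3)[OF qN] homD(1)[OF \<phi>] unfolding kern_def by auto
  then show ?thesis
    unfolding kern_def using quot_mapD(2)[OF qM] by (auto elim!: induced_map_cases)
qed

lemma image_induced_map: "induced_map M qM qN \<phi> ` mcarr FM = qN ` \<phi> ` mcarr M"
proof -
  have "induced_map M qM qN \<phi> ` mcarr FM = induced_map M qM qN \<phi> ` qM ` mcarr M"
    using quot_mapD(2)[OF qM] by simp
  also have "\<dots> = qN ` \<phi> ` mcarr M"
    using induced_map_quot by (simp add: image_image cong: image_cong)
  finally show ?thesis .
qed

end

section \<open>The torsion pair of a pseudo-torsion class\<close>

lemma pseudo_torsionD:
  assumes "pseudo_torsion G P"
  shows pseudo_torsion_nonempty: "P \<noteq> {}"
    and pseudo_torsion_subset: "P \<subseteq> G"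
    and pseudo_torsion_quotient:
      "B \<in> P \<Longrightarrow> modlam N \<Longrightarrow> strict_sub G B A \<Longrightarrow> quot_map B N q A \<Longrightarrow> N \<in> P"
    and pseudo_torsion_extension: "strict_exact G X Y Z i p \<Longrightarrow> X \<in> P \<Longrightarrow> Z \<in> P \<Longrightarrow> Y \<in> P"
proof -
  note pt = assms[unfolded pseudo_torsion_def]
  show "P \<noteq> {}" using pt by (elim conjE)
  show "P \<subseteq> G" using pt by (elim conjE)
  from pt have quot: "\<forall>B N q A. B \<in> P \<and> modlam N \<and> strict_sub G B A \<and> quot_map B N q A \<longrightarrow> N \<in> P"
    by (elim conjE)
  show "B \<in> P \<Longrightarrow> modlam N \<Longrightarrow> strict_sub G B A \<Longrightarrow> quot_map B N q A \<Longrightarrow> N \<in> P"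
    using quot[rule_format, of B N A q] by simp
  from pt have ext: "\<forall>A B C i p. strict_exact G A B C i p \<and> A \<in> P \<and> C \<in> P \<longrightarrow> B \<in> P"
    by (elim conjE)
  show "strict_exact G X Y Z i p \<Longrightarrow> X \<in> P \<Longrightarrow> Z \<in> P \<Longrightarrow> Y \<in> P"
    using ext[rule_format, of X Y Z i p] by simp
qed

lemma pseudo_torsion_subsetD: "pseudo_torsion G P \<Longrightarrow> X \<in> P \<Longrightarrow> X \<in> G"
  using pseudo_torsion_subset by blast

lemma perpD:
  assumes "F \<in> perp G P"
  shows "F \<in> G" "X \<in> P \<Longrightarrow> strict_mor G X F f \<Longrightarrow> x \<in> mcarr X \<Longrightarrow> f x = mzero F"
  using assms unfolding perp_def by blast+

lemma tors_partD:
  assumes "tors_part G P Q M T"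
  shows "strict_sub G M T" "restr M T \<in> P" "\<exists>F q. modlam F \<and> quot_map M F q T \<and> F \<in> Q"
  using assms unfolding tors_part_def by blast+

context
  fixes G :: "('m, 'r::ring_1) rmod set" and \<iota> :: "'k::field \<Rightarrow> 'r"
  assumes G: "torsion_class G" and fd: "fd_algebra \<iota>"
begin

lemma tors_part_greatest:
  assumes N: "N \<in> G" and T: "tors_part G P (perp G P) N T"
    and Y: "strict_sub G N Y" "restr N Y \<in> P"
  shows "Y \<subseteq> T"
proof
  obtain F q where F: "modlam F" "quot_map N F q T" "F \<in> perp G P"
    using tors_partD(3)[OF T] by blast
  have "strict_mor G N F q" by (rule strict_mor_quot_map[OF G N F(1,2) tors_partD(1)[OF T]])
  then have "strict_mor G (restr N Y) F q" by (rule strict_mor_restr[OF G fd _ Y(1)])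
  fix y assume "y \<in> Y"
  then have "q y = mzero F" using perpD(2)[OF F(3) Y(2)] \<open>strict_mor G (restr N Y) F q\<close> by simp
  then show "y \<in> T"
    using quot_mapD(3)[OF F(2)] \<open>y \<in> Y\<close> submodD(1)[OF strict_subD(1)[OF Y(1)]]
    unfolding kern_def by blast
qed

lemma tors_part_unique:
  assumes "N \<in> G" "tors_part G P (perp G P) N T1" "tors_part G P (perp G P) N T2"
  shows "T1 = T2"
  using tors_part_greatest[OF assms(1,3) tors_partD(1,2)[OF assms(2)]]
    tors_part_greatest[OF assms(1,2) tors_partD(1,2)[OF assms(3)]] by blast

end

lemma tors_part_strict_exact:
  assumes G: "torsion_class G" and M: "M \<in> G" and T: "tors_part G P Q M T"
    and F: "modlam F" and q: "quot_map M F q T"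
  shows "strict_exact G (restr M T) M F id q"
proof -
  note Q = quot_mapD[OF q] and Ts = tors_partD(1)[OF T]
  have "hom (restr M T) M id"
    using hom_id_restr[of T "mcarr M" M] submodD(1)[OF strict_subD(1)[OF Ts]] by simp
  then show ?thesis
    unfolding strict_exact_def
    using M torsion_class_quot_map[OF G M F q] Q Ts strict_subD(2)[OF Ts] by simp
qed

context
  fixes G P :: "('m, 'r::ring_1) rmod set" and \<iota> :: "'k::field \<Rightarrow> 'r"
  assumes G: "torsion_class G" and fd: "fd_algebra \<iota>" and P: "pseudo_torsion G P"
begin

lemma pseudo_torsion_image:
  assumes X: "X \<in> P" and f: "strict_mor G X Y f"
  shows "restr Y (f ` mcarr X) \<in> P"
proof (rule pseudo_torsion_quotient[OF P X _ strict_morD(4)[OF f]])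
  note S = strict_morD[OF f]
  show "modlam (restr Y (f ` mcarr X))"
    using modlam_restr[OF fd torsion_class_modlam[OF G S(2)] strict_subD(1)[OF S(5)]] .
  show "quot_map X (restr Y (f ` mcarr X)) f (kern X Y f)"
    using quot_map_onto_image[OF S(3)] by simp
qed

lemma pseudo_torsion_zero:
  assumes "M \<in> G"
  shows "restr M {mzero M} \<in> P"
proof -
  have M: "rmodule M" using torsion_class_rmodule[OF G assms] .
  obtain X where X: "X \<in> P" using pseudo_torsion_nonempty[OF P] by blast
  have XG: "X \<in> G" and "rmodule X"
    using X pseudo_torsion_subsetD[OF P] torsion_class_rmodule[OF G] by blast+
  have "quot_map X (restr M {mzero M}) (\<lambda>_. mzero M) (mcarr X)"
    unfolding quot_map_def kern_def
    using rmodule_zero_closed[OF \<open>rmodule X\<close>] rmodule_zero_closed[OF M] rmodule_add_zero_left[OF M]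
      rmodule_act_zero[OF M] by (auto intro!: homI)
  then show ?thesis
    using pseudo_torsion_quotient[OF P X _ strict_sub_mcarr[OF \<open>rmodule X\<close> XG]]
      modlam_restr[OF fd torsion_class_modlam[OF G assms] submod_zero[OF M]] by blast
qed

lemma pseudo_torsion_preimage:
  assumes "modlam M" "modlam F" and q: "quot_map M F q T" and T: "strict_sub G M T" "restr M T \<in> P"
    and D: "strict_sub G F D" "restr F D \<in> P"
  shows "restr M {x \<in> mcarr M. q x \<in> D} \<in> P"
proof (rule pseudo_torsion_extension[OF P _ T(2) D(2)])
  let ?C = "{x \<in> mcarr M. q x \<in> D}"
  note Q = quot_mapD[OF q]
  have C: "strict_sub G M ?C" by (rule strict_sub_quot_preimage[OF G fd assms(1,2) q T(1) D(1)])
  have TC: "T \<subseteq> ?C"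
    using Q(3) submodD(2)[OF strict_subD(1)[OF D(1)]] unfolding kern_def by auto
  have CM: "?C \<subseteq> mcarr M" by blast
  show "strict_exact G (restr M T) (restr M ?C) (restr F D) id q"
    unfolding strict_exact_def
  proof (intro conjI)
    show "restr M T \<in> G" "restr M ?C \<in> G" "restr F D \<in> G"
      using strict_subD(2) T(1) C D(1) by blast+
    show "hom (restr M T) (restr M ?C) id" using TC by (rule hom_id_restr)
    show "hom (restr M ?C) (restr F D) q" by (rule hom_restr[OF Q(1) CM]) blast
    show "q ` mcarr (restr M ?C) = mcarr (restr F D)"
      using image_preimage_eq[of D q "mcarr M"] Q(2) submodD(1)[OF strict_subD(1)[OF D(1)]] by simp
    show "id ` mcarr (restr M T) = kern (restr M ?C) (restr F D) q"
      using Q(3) TC unfolding kern_def by auto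
    have "strict_sub G (restr M ?C) (T \<inter> ?C)"
      by (rule strict_sub_restr[OF T(1) strict_subD(1,2)[OF C]])
    then show "strict_sub G (restr M ?C) (id ` mcarr (restr M T))"
      using TC by (simp add: Int_absorb2)
  qed simp
qed

lemma perp_quot_of_maximal:
  assumes M: "M \<in> G" and T: "strict_sub G M T" "restr M T \<in> P"
    and max: "\<And>C. strict_sub G M C \<Longrightarrow> restr M C \<in> P \<Longrightarrow> T \<subseteq> C \<Longrightarrow> C = T"
    and F: "modlam F" and q: "quot_map M F q T"
  shows "F \<in> perp G P"
  unfolding perp_def
proof (intro CollectI conjI allI impI ballI)
  show FG: "F \<in> G" by (rule torsion_class_quot_map[OF G M F q])
  fix X f x assume "X \<in> P \<and> strict_mor G X F f" and x: "x \<in> mcarr X"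
  then have X: "X \<in> P" and f: "strict_mor G X F f" by simp_all
  let ?I = "f ` mcarr X" and ?C = "{y \<in> mcarr M. q y \<in> f ` mcarr X}"
  note Q = quot_mapD[OF q]
  have I: "strict_sub G F ?I" "restr F ?I \<in> P"
    using strict_morD(5)[OF f] pseudo_torsion_image[OF X f] by blast+
  have MM: "modlam M" by (rule torsion_class_modlam[OF G M])
  have "strict_sub G M ?C" by (rule strict_sub_quot_preimage[OF G fd MM F q T(1) I(1)])
  moreover have "restr M ?C \<in> P" by (rule pseudo_torsion_preimage[OF MM F q T I])
  moreover have "T \<subseteq> ?C"
    using Q(3) submodD(2)[OF strict_subD(1)[OF I(1)]] unfolding kern_def by auto
  ultimately have C: "?C = T" by (rule max)
  have "f x \<in> mcarr F" using homD(1)[OF strict_morD(3)[OF f] x] .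
  then obtain m where m: "m \<in> mcarr M" "f x = q m" using Q(2) by blast
  then have "m \<in> ?C" using imageI[OF x, of f] by simp
  then have "m \<in> kern M F q" using C Q(3) by simp
  then show "f x = mzero F" using m(2) unfolding kern_def by simp
qed

lemma tors_part_exists:
  assumes M: "M \<in> G"
  shows "\<exists>T. tors_part G P (perp G P) M T"
proof -
  have "modlam M" and RM: "rmodule M" using torsion_class_modlam[OF G M] modlam_rmodule by blast+
  define Fam where "Fam = {A. strict_sub G M A \<and> restr M A \<in> P}"
  have "{mzero M} \<in> Fam"
    unfolding Fam_def
    using pseudo_torsion_zero[OF M] strict_sub_zero[OF RM] pseudo_torsion_subsetD[OF P] by blast
  then obtain T where T: "T \<in> Fam" and max: "\<forall>C\<in>Fam. T \<subseteq> C \<longrightarrow> C = T"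
    using modlam_maximal_submod[OF RM fd \<open>modlam M\<close>, of "{mzero M}" Fam]
    unfolding Fam_def by (blast dest: strict_subD(1))
  have T': "strict_sub G M T" "restr M T \<in> P" using T unfolding Fam_def by simp_all
  then have "submod M T" by (blast dest: strict_subD(1))
  then have "modlam (quot_mod M T)" "quot_map M (quot_mod M T) (quot_rep M T) T"
    using modlam_quot_mod[OF RM] quot_map_quot_mod[OF RM] \<open>modlam M\<close> by blast+
  moreover have "quot_mod M T \<in> perp G P"
    by (rule perp_quot_of_maximal[OF M T' _ calculation]) (use max Fam_def in blast)
  ultimately show ?thesis unfolding tors_part_def using T' by blast
qed

lemma tors_part_image_subset:
  assumes \<phi>: "strict_mor G M N \<phi>"
    and TM: "tors_part G P (perp G P) M TM" and TN: "tors_part G P (perp G P) N TN"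
  shows "\<phi> ` TM \<subseteq> TN"
proof -
  have "strict_mor G (restr M TM) N \<phi>" by (rule strict_mor_restr[OF G fd \<phi> tors_partD(1)[OF TM]])
  then have "strict_sub G N (\<phi> ` TM)" "restr N (\<phi> ` TM) \<in> P"
    using strict_morD(5) pseudo_torsion_image[OF tors_partD(2)[OF TM]] by fastforce+
  then show ?thesis by (rule tors_part_greatest[OF G fd strict_morD(2)[OF \<phi>] TN])
qed

lemma tors_part_strict_mor:
  assumes \<phi>: "strict_mor G M N \<phi>"
    and TM: "tors_part G P (perp G P) M TM" and TN: "tors_part G P (perp G P) N TN"
  shows "strict_mor G (restr M TM) (restr N TN) \<phi>"
  using strict_mor_corestr[OF strict_mor_restr[OF G fd \<phi> tors_partD(1)[OF TM]] tors_partD(1)[OF TN]]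
    tors_part_image_subset[OF assms] by simp

lemma induced_map_strict_mor:
  assumes \<phi>: "strict_mor G M N \<phi>"
    and TM: "tors_part G P (perp G P) M TM" and TN: "tors_part G P (perp G P) N TN"
    and FM: "modlam FM" "quot_map M FM qM TM" and FN: "modlam FN" "quot_map N FN qN TN"
  shows "strict_mor G FM FN (induced_map M qM qN \<phi>)"
    and "\<forall>x\<in>mcarr M. induced_map M qM qN \<phi> (qM x) = qN (\<phi> x)"
proof -
  note S = strict_morD[OF \<phi>]
  have RM: "rmodule M" "rmodule N" "rmodule FM" "rmodule FN"
    using S(1,2) FM(1) FN(1) torsion_class_rmodule[OF G] modlam_rmodule by blast+
  note induced = hom_induced_map[OF RM S(3) FM(2) FN(2) tors_part_image_subset[OF \<phi> TM TN]]
    kern_induced_map[OF RM S(3) FM(2) FN(2) tors_part_image_subset[OF \<phi> TM TN]]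
    image_induced_map[OF RM S(3) FM(2) FN(2) tors_part_image_subset[OF \<phi> TM TN]]
    induced_map_quot[OF RM S(3) FM(2) FN(2) tors_part_image_subset[OF \<phi> TM TN]]
  have qM: "strict_mor G M FM qM" by (rule strict_mor_quot_map[OF G S(1) FM tors_partD(1)[OF TM]])
  have qN: "strict_mor G N FN qN" by (rule strict_mor_quot_map[OF G S(2) FN tors_partD(1)[OF TN]])
  have "strict_sub G FM (qM ` {x \<in> mcarr M. \<phi> x \<in> TN})"
    using strict_mor_image[OF G fd qM strict_mor_preimage[OF G fd \<phi> tors_partD(1)[OF TN]]] .
  moreover have "strict_sub G FN (qN ` \<phi> ` mcarr M)" using strict_mor_image[OF G fd qN S(5)] .
  ultimately show "strict_mor G FM FN (induced_map M qM qN \<phi>)"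
    unfolding strict_mor_def using induced strict_morD(2)[OF qM] strict_morD(2)[OF qN] by simp
  show "\<forall>x\<in>mcarr M. induced_map M qM qN \<phi> (qM x) = qN (\<phi> x)" using induced(4) by blast
qed

end

theorem mainTheorem9:
  fixes \<iota> :: "'k::field \<Rightarrow> 'r::ring_1"
    and G P Q :: "'r umod set"
  assumes "fd_algebra \<iota>"
    and "torsion_class G"
    and "pseudo_torsion G P"
    and "Q = perp G P"
  shows "(\<forall>M\<in>G. (\<exists>!T. tors_part G P Q M T) \<and>
            (\<forall>T F q. tors_part G P Q M T \<and> modlam F \<and> quot_map M F q T
               \<longrightarrow> strict_exact G (restr M T) M F id q))
       \<and> (\<forall>M N \<phi>. strict_mor G M N \<phi> \<longrightarrow>
            (\<forall>TM TN. tors_part G P Q M TM \<and> tors_part G P Q N TN \<longrightarrow>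
               \<phi> ` TM \<subseteq> TN \<and>
               strict_mor G (restr M TM) (restr N TN) \<phi> \<and>
               (\<forall>FM FN qM qN. modlam FM \<and> quot_map M FM qM TM \<and> modlam FN \<and> quot_map N FN qN TN
                  \<longrightarrow> (\<exists>\<psi>. strict_mor G FM FN \<psi> \<and> (\<forall>x\<in>mcarr M. \<psi> (qM x) = qN (\<phi> x))))))"
proof -
  note G = assms(2) and fd = assms(1) and P = assms(3)
  show ?thesis
    unfolding assms(4)
  proof (intro conjI ballI allI impI)
    fix M assume M: "M \<in> G"
    show "\<exists>!T. tors_part G P (perp G P) M T"
      using tors_part_exists[OF G fd P M] tors_part_unique[OF G fd M] by blast
    show "strict_exact G (restr M T) M F id q"
      if "tors_part G P (perp G P) M T \<and> modlam F \<and> quot_map M F q T" for T F q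
      using tors_part_strict_exact[OF G M] that by blast
  next
    fix M N \<phi> TM TN
    assume \<phi>: "strict_mor G M N \<phi>"
      and "tors_part G P (perp G P) M TM \<and> tors_part G P (perp G P) N TN"
    then have T: "tors_part G P (perp G P) M TM" "tors_part G P (perp G P) N TN" by simp_all
    show "\<phi> ` TM \<subseteq> TN" by (rule tors_part_image_subset[OF G fd P \<phi> T])
    show "strict_mor G (restr M TM) (restr N TN) \<phi>" by (rule tors_part_strict_mor[OF G fd P \<phi> T])
    show "\<exists>\<psi>. strict_mor G FM FN \<psi> \<and> (\<forall>x\<in>mcarr M. \<psi> (qM x) = qN (\<phi> x))"
      if "modlam FM \<and> quot_map M FM qM TM \<and> modlam FN \<and> quot_map N FN qN TN" for FM FN qM qN
      using induced_map_strict_mor[OF G fd P \<phi> T] that by blast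
  qed
qed

end
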